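(* For every $\varepsilon>0$ there exist two Borel probability measures $\mu$ and $\nu$ on $\mathbb K$, both doubling on the dyadic cylinders, such that $$\sup_{n\ge1}\ \sup_{x\in\mathbb K}\left|\log\frac{\mu(I_n(x))}{\mu(I_{n-1}(x))}-\log\frac{\nu(I_n(x))}{\nu(I_{n-1}(x))}\right|<\varepsilon,$$ and $|\dim_*(\mu)-\dim_*(\nu)|>\frac14$.
   Context: $\mathbb K=\{0,1\}^{\mathbb N}$ with the metric in which a cylinder of generation $n$ (a set $\{x:x_1=\epsilon_1,\dots,x_n=\epsilon_n\}$) has diameter $2^{-n}$; $I_n(x)$ is the generation-$n$ cylinder containing $x$, $I_0(x)=\mathbb K$. A measure $m$ is doubling on the dyadics if there is $C>0$ with $m(\widehat I)\le C\,m(I)$ for every cylinder $I$ of generation $n\ge1$, where $\widehat I$ is the generation-$(n-1)$ cylinder containing $I$. $\dim_*(m)=\inf\{\dim_{\mathcal H}E: E\subset\mathbb K,\ m(E)>0\}$, with $\dim_{\mathcal H}$ the Hausdorff dimension. *)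

theory Defs
  imports "HOL-Probability.Probability"
begin

text \<open>Cantor space K = {0,1}^N, represented as nat \<Rightarrow> bool; coordinate x_(i+1) of the
  paper is x i here (0-based).\<close>
type_synonym cantor = "nat \<Rightarrow> bool"

text \<open>Metric: if x and y first differ at (0-based) coordinate j, they lie in a common
  cylinder of generation j (diameter 2^-j) but not of generation j+1.\<close>
definition cdist :: "cantor \<Rightarrow> cantor \<Rightarrow> real" where
  "cdist x y = (if x = y then 0 else (1/2) ^ (LEAST j. x j \<noteq> y j))"

definition cyl :: "nat \<Rightarrow> cantor \<Rightarrow> cantor set" where
  "cyl n x = {y. \<forall>i<n. y i = x i}"

definition Kborel :: "cantor measure" where
  "Kborel = sigma UNIV {U. openin (Metric_space.mtopology UNIV cdist) U}"

definition borel_prob :: "cantor measure \<Rightarrow> bool" where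
  "borel_prob m \<longleftrightarrow> prob_space m \<and> sets m = sets Kborel"

definition doubling :: "cantor measure \<Rightarrow> bool" where
  "doubling m \<longleftrightarrow> (\<exists>C>0. \<forall>n\<ge>1. \<forall>x. measure m (cyl (n-1) x) \<le> C * measure m (cyl n x))"

definition cdiam :: "cantor set \<Rightarrow> real" where
  "cdiam A = (if A = {} then 0 else Sup {cdist x y | x y. x \<in> A \<and> y \<in> A})"

definition hausdorff_delta :: "real \<Rightarrow> real \<Rightarrow> cantor set \<Rightarrow> ennreal" where
  "hausdorff_delta s \<delta> E =
     (INF U \<in> {U :: nat \<Rightarrow> cantor set. E \<subseteq> (\<Union>i. U i) \<and> (\<forall>i. cdiam (U i) \<le> \<delta>)}.
        \<Sum>i. ennreal (cdiam (U i) powr s))"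

definition hausdorff_measure :: "real \<Rightarrow> cantor set \<Rightarrow> ennreal" where
  "hausdorff_measure s E = (SUP \<delta> \<in> {0<..}. hausdorff_delta s \<delta> E)"

definition hausdorff_dim :: "cantor set \<Rightarrow> real" where
  "hausdorff_dim E = Inf {s. s \<ge> 0 \<and> hausdorff_measure s E = 0}"

definition lower_dim :: "cantor measure \<Rightarrow> real" where
  "lower_dim m = Inf {hausdorff_dim E | E. E \<in> sets m \<and> emeasure m E > 0}"

end

theory Submission
  imports Defs
begin

text \<open>Both measures are images of Lebesgue measure on \<open>[0, 1)\<close> under a decoding map driven by
  conditional digit probabilities.  The digits are grouped into blocks, each consisting of a test
  window followed by a much longer entropy window.  Test digits are \<open>1\<close> with probability
  \<open>1/2 - \<eta>\<close> under \<open>\<mu>\<close> and \<open>1/2 + \<eta>\<close> under \<open>\<nu>\<close>; a test is passed if at least half of its digits are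
  \<open>1\<close>.  Entropy digits are \<open>1\<close> with probability \<open>1/256\<close> while every test so far has been passed,
  and are fair coins otherwise.  The two measures differ only on test digits, so the log-ratios of
  their conditional probabilities differ by at most \<open>ln ((1/2 + \<eta>) / (1/2 - \<eta>)) < \<epsilon>\<close>, and both are
  doubling since every conditional probability is at least \<open>1/256\<close>.

  Under \<open>\<mu>\<close> a Chernoff bound shows that each test is passed with probability at most \<open>1/2\<close>, so almost
  every point eventually fails a test; from then on every conditional probability is at most
  \<open>9/16\<close>, and the mass distribution principle gives dimension at least \<open>4/5\<close> to every set of positive
  \<open>\<mu>\<close>-measure.  Under \<open>\<nu>\<close>, with probability at least \<open>1/2\<close> every test is passed and every entropy
  window has few \<open>1\<close>s.  At the end of block \<open>k\<close> such points lie in at most \<open>2^(11 j)\<close> cylinders of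
  generation at least \<open>32 j\<close>, so this set has zero \<open>1/2\<close>-dimensional Hausdorff measure.\<close>

section \<open>The Cantor metric and its Borel sets\<close>

lemma cdist_nonneg: "0 \<le> cdist x y"
  by (simp add: cdist_def)

lemma cdist_le_1: "cdist x y \<le> 1"
  by (simp add: cdist_def power_le_one)

lemma cdist_commute: "cdist x y = cdist y x"
proof -
  have "(LEAST j. x j \<noteq> y j) = (LEAST j. y j \<noteq> x j)" by metis
  then show ?thesis by (simp add: cdist_def eq_commute)
qed

lemma cdist_eq_0_iff: "cdist x y = 0 \<longleftrightarrow> x = y"
  by (simp add: cdist_def)

lemma cdist_eq_first_difference:
  assumes "x j \<noteq> y j" "\<And>i. i < j \<Longrightarrow> x i = y i"
  shows "cdist x y = (1/2)^j"
proof -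
  have "(LEAST i. x i \<noteq> y i) = j"
    using assms by (intro Least_equality) (auto simp: not_less[symmetric])
  then show ?thesis using assms(1) by (auto simp: cdist_def)
qed

lemma cdist_le_half_pow_iff: "cdist x y \<le> (1/2)^k \<longleftrightarrow> (\<forall>i<k. x i = y i)"
proof (cases "x = y")
  case False
  then obtain j where j: "x j \<noteq> y j" "\<And>i. i < j \<Longrightarrow> x i = y i"
    using exists_least_iff[of "\<lambda>j. x j \<noteq> y j"] by blast
  then have "cdist x y \<le> (1/2)^k \<longleftrightarrow> k \<le> j"
    by (simp add: cdist_eq_first_difference power_decreasing_iff)
  also have "\<dots> \<longleftrightarrow> (\<forall>i<k. x i = y i)"
    using j by (meson le_less_trans linorder_not_le)
  finally show ?thesis .
qed (simp add: cdist_def max_def)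

lemma cdist_less_half_pow_iff: "cdist x y < (1/2)^k \<longleftrightarrow> (\<forall>i\<le>k. x i = y i)"
proof (cases "x = y")
  case False
  then obtain j where j: "x j \<noteq> y j" "\<And>i. i < j \<Longrightarrow> x i = y i"
    using exists_least_iff[of "\<lambda>j. x j \<noteq> y j"] by blast
  then have "cdist x y < (1/2)^k \<longleftrightarrow> k < j"
    by (simp add: cdist_eq_first_difference power_strict_decreasing_iff)
  also have "\<dots> \<longleftrightarrow> (\<forall>i\<le>k. x i = y i)"
    using j by (meson le_less_trans linorder_not_le)
  finally show ?thesis .
qed (simp add: cdist_def max_def)

lemma cdist_ultrametric: "cdist x z \<le> max (cdist x y) (cdist y z)"
proof (cases "x = z")
  case False
  then obtain j where j: "x j \<noteq> z j" "\<And>i. i < j \<Longrightarrow> x i = z i"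
    using exists_least_iff[of "\<lambda>j. x j \<noteq> z j"] by blast
  have "\<not> (cdist x y < (1/2)^j \<and> cdist y z < (1/2)^j)"
    using j(1) by (auto simp: cdist_less_half_pow_iff)
  moreover have "cdist x z = (1/2)^j" using j by (rule cdist_eq_first_difference)
  ultimately show ?thesis by linarith
qed (simp add: cdist_def max_def)

lemma cdist_triangle: "cdist x z \<le> cdist x y + cdist y z"
  using cdist_ultrametric[of x z y] cdist_nonneg[of x y] cdist_nonneg[of y z] by linarith

interpretation cantor: Metric_space UNIV cdist
  by unfold_locales (auto simp: cdist_nonneg cdist_commute cdist_eq_0_iff cdist_triangle)

lemma mem_cyl_iff: "y \<in> cyl n x \<longleftrightarrow> cdist x y \<le> (1/2)^n"
  by (auto simp: cyl_def cdist_le_half_pow_iff)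

lemma self_in_cyl [simp]: "x \<in> cyl n x"
  by (simp add: cyl_def)

lemma openin_cyl: "openin cantor.mtopology (cyl n x)"
  unfolding cantor.openin_mtopology
proof (intro conjI allI impI)
  fix y assume "y \<in> cyl n x"
  then have "cantor.mball y ((1/2)^n) \<subseteq> cyl n x"
    by (auto simp: cyl_def cdist_less_half_pow_iff)
  then show "\<exists>r>0. cantor.mball y r \<subseteq> cyl n x" by (intro exI[of _ "(1/2)^n"]) simp
qed simp

definition trunc :: "nat \<Rightarrow> cantor \<Rightarrow> cantor" where
  "trunc n x = (\<lambda>i. i < n \<and> x i)"

text \<open>Words of length \<open>n\<close> are encoded as sequences that vanish from position \<open>n\<close> on.\<close>
definition words :: "nat \<Rightarrow> cantor set" where
  "words n = {w. \<forall>i\<ge>n. \<not> w i}"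

lemma words_eq_image_Pow: "words n = (\<lambda>S i. i \<in> S) ` Pow {..<n}"
proof
  show "words n \<subseteq> (\<lambda>S i. i \<in> S) ` Pow {..<n}"
  proof
    fix w assume "w \<in> words n"
    then have "w = (\<lambda>i. i \<in> {i. w i})" "{i. w i} \<in> Pow {..<n}"
      by (auto simp: words_def not_le[symmetric])
    then show "w \<in> (\<lambda>S i. i \<in> S) ` Pow {..<n}" by blast
  qed
qed (auto simp: words_def)

lemma finite_words [simp]: "finite (words n)"
  by (simp add: words_eq_image_Pow)

lemma card_words_le: "card (words n) \<le> 2^n"
  using card_image_le[of "Pow {..<n}" "\<lambda>S i. i \<in> S"] by (simp add: words_eq_image_Pow card_Pow)

lemma trunc_in_words: "trunc n x \<in> words n"
  by (simp add: trunc_def words_def)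

lemma cyl_trunc: "cyl n (trunc n x) = cyl n x"
  by (simp add: cyl_def trunc_def)

lemma mem_cyl_trunc: "x \<in> cyl n (trunc n x)"
  by (simp add: cyl_trunc)

lemma disjoint_cyl_words:
  assumes "w \<in> words n" "v \<in> words n" "w \<noteq> v"
  shows "cyl n w \<inter> cyl n v = {}"
proof -
  obtain i where "w i \<noteq> v i" using assms(3) by auto
  moreover have "i < n" using assms(1,2) \<open>w i \<noteq> v i\<close> by (auto simp: words_def not_less[symmetric])
  ultimately show ?thesis by (auto simp: cyl_def)
qed

definition cylinders :: "cantor set set" where
  "cylinders = (\<Union>n. cyl n ` words n)"

lemma countable_cylinders: "countable cylinders"
  unfolding cylinders_def by (rule countable_UN) (auto intro: countable_finite)

lemma openin_eq_Union_cylinders: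
  assumes "openin cantor.mtopology U"
  shows "U = \<Union>{C \<in> cylinders. C \<subseteq> U}"
proof
  show "U \<subseteq> \<Union>{C \<in> cylinders. C \<subseteq> U}"
  proof
    fix x assume "x \<in> U"
    then obtain r where r: "r > 0" "cantor.mball x r \<subseteq> U"
      using assms cantor.openin_mtopology by blast
    obtain n where n: "(1/2::real)^n < r" using real_arch_pow_inv[of r "1/2"] r by auto
    have "cyl n x \<subseteq> U" using r n by (force simp: mem_cyl_iff)
    moreover have "cyl n x \<in> cylinders"
      unfolding cylinders_def using cyl_trunc[of n x] trunc_in_words[of n x]
        by (metis UN_iff imageI UNIV_I)
    ultimately show "x \<in> \<Union>{C \<in> cylinders. C \<subseteq> U}" using self_in_cyl by blast
  qed
qed auto

lemma sets_Kborel: "sets Kborel = sigma_sets UNIV {U. openin cantor.mtopology U}"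
  unfolding Kborel_def by (rule sets_measure_of) simp

lemma cyl_in_Kborel [simp]: "cyl n x \<in> sets Kborel"
  unfolding sets_Kborel using openin_cyl by blast

lemma singleton_in_Kborel: "{y} \<in> sets Kborel"
proof -
  have "{y} = (\<Inter>k. cyl k y)"
    by (auto simp: cyl_def)
  then show ?thesis by (auto intro: sets.countable_INT)
qed

section \<open>Measures given by conditional digit probabilities\<close>

definition prefix_determined :: "nat \<Rightarrow> (cantor \<Rightarrow> 'a) \<Rightarrow> bool" where
  "prefix_determined n f \<longleftrightarrow> (\<forall>x y. (\<forall>i<n. x i = y i) \<longrightarrow> f x = f y)"

lemma prefix_determinedI:
  "(\<And>x y. (\<And>i. i < n \<Longrightarrow> x i = y i) \<Longrightarrow> f x = f y) \<Longrightarrow> prefix_determined n f"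
  unfolding prefix_determined_def by blast

lemma prefix_determinedD:
  "prefix_determined n f \<Longrightarrow> (\<And>i. i < n \<Longrightarrow> x i = y i) \<Longrightarrow> f x = f y"
  unfolding prefix_determined_def by blast

lemma prefix_determined_mono:
  assumes "prefix_determined n f" "n \<le> m"
  shows "prefix_determined m f"
proof (rule prefix_determinedI)
  fix x y :: cantor assume "\<And>i. i < m \<Longrightarrow> x i = y i"
  then show "f x = f y" using assms(2) by (intro prefix_determinedD[OF assms(1)]) auto
qed

lemma prefix_determined_of_bool:
  assumes "prefix_determined n Q"
  shows "prefix_determined n (\<lambda>x. of_bool (Q x))"
proof (rule prefix_determinedI)
  fix x y :: cantor assume "\<And>i. i < n \<Longrightarrow> x i = y i"
  then have "Q x = Q y" by (rule prefix_determinedD[OF assms])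
  then show "of_bool (Q x) = of_bool (Q y)" by simp
qed

lemma prefix_determined_upd: "prefix_determined n f \<Longrightarrow> n \<le> i \<Longrightarrow> f (x(i := b)) = f x"
  by (rule prefix_determinedD[of n f]) auto

lemma prefix_determined_eq_Union_cyl:
  assumes "prefix_determined n (\<lambda>x. x \<in> A)"
  shows "A = (\<Union>w\<in>words n \<inter> A. cyl n w)"
proof
  show "A \<subseteq> (\<Union>w\<in>words n \<inter> A. cyl n w)"
  proof
    fix x assume "x \<in> A"
    then have "trunc n x \<in> A" using prefix_determinedD[OF assms, of "trunc n x" x]
      by (simp add: trunc_def)
    then show "x \<in> (\<Union>w\<in>words n \<inter> A. cyl n w)" using trunc_in_words mem_cyl_trunc by blast
  qed
  show "(\<Union>w\<in>words n \<inter> A. cyl n w) \<subseteq> A"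
    using assms by (auto simp: prefix_determined_def cyl_def)
qed

lemma prefix_determined_in_Kborel:
  assumes "prefix_determined n (\<lambda>x. x \<in> A)"
  shows "A \<in> sets Kborel"
  by (subst prefix_determined_eq_Union_cyl[OF assms]) (intro sets.finite_UN; simp)

text \<open>\<open>P i x\<close> is the probability that digit \<open>i\<close> is \<open>True\<close>, given the digits of \<open>x\<close> before \<open>i\<close>.\<close>
definition admissible :: "(nat \<Rightarrow> cantor \<Rightarrow> real) \<Rightarrow> bool" where
  "admissible P \<longleftrightarrow> (\<forall>i x. 0 < P i x \<and> P i x < 1) \<and> (\<forall>i. prefix_determined i (P i))"

definition digit_prob :: "(nat \<Rightarrow> cantor \<Rightarrow> real) \<Rightarrow> nat \<Rightarrow> cantor \<Rightarrow> real" where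
  "digit_prob P i x = (if x i then P i x else 1 - P i x)"

definition cyl_weight :: "(nat \<Rightarrow> cantor \<Rightarrow> real) \<Rightarrow> nat \<Rightarrow> cantor \<Rightarrow> real" where
  "cyl_weight P n x = (\<Prod>i<n. digit_prob P i x)"

text \<open>For \<open>f\<close> determined by the first \<open>n\<close> digits, \<open>expect P n f\<close> is the integral of \<open>f\<close> against the
  measure with digit probabilities \<open>P\<close> constructed below.\<close>
definition expect :: "(nat \<Rightarrow> cantor \<Rightarrow> real) \<Rightarrow> nat \<Rightarrow> (cantor \<Rightarrow> real) \<Rightarrow> real" where
  "expect P n f = (\<Sum>w\<in>words n. cyl_weight P n w * f w)"

lemma cyl_weight_0 [simp]: "cyl_weight P 0 x = 1"
  by (simp add: cyl_weight_def)

lemma cyl_weight_Suc: "cyl_weight P (Suc n) x = cyl_weight P n x * digit_prob P n x"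
  by (simp add: cyl_weight_def)

lemma admissible_prefix_determined: "admissible P \<Longrightarrow> prefix_determined i (P i)"
  by (simp add: admissible_def)

lemma digit_prob_pos: "admissible P \<Longrightarrow> 0 < digit_prob P i x"
  by (auto simp: admissible_def digit_prob_def)

lemma digit_prob_le_1: "admissible P \<Longrightarrow> digit_prob P i x \<le> 1"
  by (auto simp: admissible_def digit_prob_def less_imp_le)

lemma cyl_weight_pos: "admissible P \<Longrightarrow> 0 < cyl_weight P n x"
  by (induction n) (auto simp: cyl_weight_Suc digit_prob_pos)

lemma prefix_determined_digit_prob:
  assumes "admissible P"
  shows "prefix_determined (Suc i) (digit_prob P i)"
proof (rule prefix_determinedI)
  fix x y :: cantor assume xy: "\<And>j. j < Suc i \<Longrightarrow> x j = y j"
  then have "P i x = P i y" by (intro prefix_determinedD[OF admissible_prefix_determined[OF assms]]) simp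
  then show "digit_prob P i x = digit_prob P i y" using xy[of i] by (simp add: digit_prob_def)
qed

lemma prefix_determined_cyl_weight:
  assumes "admissible P"
  shows "prefix_determined n (cyl_weight P n)"
proof (rule prefix_determinedI)
  fix x y :: cantor assume "\<And>j. j < n \<Longrightarrow> x j = y j"
  then show "cyl_weight P n x = cyl_weight P n y"
    unfolding cyl_weight_def
    by (intro prod.cong refl prefix_determinedD[OF prefix_determined_digit_prob[OF assms]]) auto
qed

lemma words_Suc: "words (Suc n) = words n \<union> (\<lambda>w. w(n := True)) ` words n"
proof
  show "words (Suc n) \<subseteq> words n \<union> (\<lambda>w. w(n := True)) ` words n"
  proof
    fix w assume w: "w \<in> words (Suc n)"
    show "w \<in> words n \<union> (\<lambda>w. w(n := True)) ` words n"
    proof (cases "w n")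
      case True
      then have "w = (w(n := False))(n := True)" "w(n := False) \<in> words n"
        using w by (auto simp: words_def fun_upd_idem)
      then show ?thesis by blast
    next
      case False
      then have "w \<in> words n" using w by (auto simp: words_def) (metis Suc_leI le_neq_implies_less)
      then show ?thesis by blast
    qed
  qed
qed (auto simp: words_def)

lemma sum_words_Suc:
  "(\<Sum>w\<in>words (Suc n). f w) = (\<Sum>w\<in>words n. f w + f (w(n := True)))"
proof -
  have "inj_on (\<lambda>w. w(n := True)) (words n)"
  proof (rule inj_onI, rule ext)
    fix v w i assume "v \<in> words n" "w \<in> words n" "v(n := True) = w(n := True)"
    then show "v i = w i" by (cases "i = n") (auto simp: words_def dest: fun_cong[of _ _ i])
  qed
  moreover have "words n \<inter> (\<lambda>w. w(n := True)) ` words n = {}"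
    by (auto simp: words_def)
  ultimately show ?thesis
    by (simp add: words_Suc sum.union_disjoint sum.reindex sum.distrib)
qed

lemma expect_Suc:
  assumes "admissible P"
  shows "expect P (Suc n) f =
    (\<Sum>w\<in>words n. cyl_weight P n w * ((1 - P n w) * f w + P n w * f (w(n := True))))"
  unfolding expect_def sum_words_Suc
proof (rule sum.cong[OF refl])
  fix w assume "w \<in> words n"
  then have "\<not> w n" by (simp add: words_def)
  moreover have "cyl_weight P n (w(n := True)) = cyl_weight P n w" "P n (w(n := True)) = P n w"
    using assms
    by (auto intro: prefix_determined_upd prefix_determined_cyl_weight admissible_prefix_determined)
  ultimately show "cyl_weight P (Suc n) w * f w +
      cyl_weight P (Suc n) (w(n := True)) * f (w(n := True)) =
      cyl_weight P n w * ((1 - P n w) * f w + P n w * f (w(n := True)))"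
    by (simp add: cyl_weight_Suc digit_prob_def algebra_simps)
qed

lemma expect_Suc_digit:
  assumes "admissible P" "prefix_determined n g"
  shows "expect P (Suc n) (\<lambda>x. g x * c (x n)) =
    expect P n (\<lambda>x. g x * ((1 - P n x) * c False + P n x * c True))"
  unfolding expect_Suc[OF assms(1)] unfolding expect_def
proof (intro sum.cong refl)
  fix w assume "w \<in> words n"
  then have "\<not> w n" by (simp add: words_def)
  then show "cyl_weight P n w *
      ((1 - P n w) * (g w * c (w n)) + P n w * (g (w(n := True)) * c ((w(n := True)) n))) =
      cyl_weight P n w * (g w * ((1 - P n w) * c False + P n w * c True))"
    by (simp add: prefix_determined_upd[OF assms(2)] algebra_simps)
qed

lemma expect_prefix_determined:
  assumes "admissible P" "prefix_determined n f" "n \<le> m"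
  shows "expect P m f = expect P n f"
  using assms(3)
proof (induction m rule: dec_induct)
  case (step m)
  have "prefix_determined m f" using prefix_determined_mono[OF assms(2) step(1)] .
  then show ?case using expect_Suc_digit[OF assms(1), of m f "\<lambda>_. 1"] step by (simp add: algebra_simps)
qed simp

lemma expect_const: "admissible P \<Longrightarrow> expect P n (\<lambda>_. c) = c"
proof -
  assume P: "admissible P"
  have "words 0 = {\<lambda>_. False}" by (auto simp: words_def)
  then have "expect P 0 (\<lambda>_. c) = c" by (simp add: expect_def)
  then show ?thesis
    using expect_prefix_determined[OF P, of 0 "\<lambda>_. c" n] by (simp add: prefix_determined_def)
qed

lemma sum_cyl_weight: "admissible P \<Longrightarrow> (\<Sum>w\<in>words n. cyl_weight P n w) = 1"
  using expect_const[of P n 1] by (simp add: expect_def)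

lemma cyl_weight_ge_pow:
  assumes "admissible P" "\<And>i x. c \<le> digit_prob P i x" "0 \<le> c"
  shows "c ^ n \<le> cyl_weight P n x"
proof (induction n)
  case (Suc n)
  have "c ^ n * c \<le> cyl_weight P n x * digit_prob P n x"
    by (rule mult_mono) (use Suc assms cyl_weight_pos[OF assms(1), of n x] in auto)
  then show ?case by (simp add: cyl_weight_Suc mult.commute)
qed simp

lemma card_heavy_words:
  assumes P: "admissible P" and "0 < h"
  shows "real (card {w \<in> words N. h \<le> cyl_weight P N w}) \<le> 1 / h"
proof -
  let ?H = "{w \<in> words N. h \<le> cyl_weight P N w}"
  have "real (card ?H) * h = (\<Sum>w\<in>?H. h)" by simp
  also have "\<dots> \<le> (\<Sum>w\<in>?H. cyl_weight P N w)" by (rule sum_mono) simp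
  also have "\<dots> \<le> (\<Sum>w\<in>words N. cyl_weight P N w)"
    using cyl_weight_pos[OF P] by (intro sum_mono2) (auto intro: less_imp_le)
  also have "\<dots> = 1" by (rule sum_cyl_weight[OF P])
  finally show ?thesis using \<open>0 < h\<close> by (simp add: field_simps)
qed

lemma expect_mono: "admissible P \<Longrightarrow> (\<And>x. f x \<le> g x) \<Longrightarrow> expect P n f \<le> expect P n g"
  unfolding expect_def by (intro sum_mono mult_left_mono) (auto intro: less_imp_le cyl_weight_pos)

lemma expect_nonneg: "admissible P \<Longrightarrow> (\<And>x. 0 \<le> f x) \<Longrightarrow> 0 \<le> expect P n f"
  using expect_mono[of P "\<lambda>_. 0" f n] by (simp add: expect_const)

lemma expect_le_1: "admissible P \<Longrightarrow> (\<And>x. f x \<le> 1) \<Longrightarrow> expect P n f \<le> 1"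
  using expect_mono[of P f "\<lambda>_. 1" n] by (simp add: expect_const)

lemma expect_add: "expect P n (\<lambda>x. f x + g x) = expect P n f + expect P n g"
  unfolding expect_def by (simp add: algebra_simps sum.distrib)

lemma expect_cmult: "expect P n (\<lambda>x. c * f x) = c * expect P n f"
  unfolding expect_def by (simp add: algebra_simps sum_distrib_left)

text \<open>The measure with digit probabilities \<open>P\<close> is the image of Lebesgue measure on \<open>[0, 1)\<close> under
  a decoding map: each cylinder of generation \<open>n\<close> corresponds to a half-open interval of length
  \<open>cyl_weight P n x\<close>, split in proportion \<open>1 - P n x : P n x\<close> between the children with
  digit \<open>False\<close> (left) and \<open>True\<close> (right).\<close>

definition code_start :: "(nat \<Rightarrow> cantor \<Rightarrow> real) \<Rightarrow> nat \<Rightarrow> cantor \<Rightarrow> real" where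
  "code_start P n x = (\<Sum>i<n. if x i then cyl_weight P i x * (1 - P i x) else 0)"

definition code_interval :: "(nat \<Rightarrow> cantor \<Rightarrow> real) \<Rightarrow> nat \<Rightarrow> cantor \<Rightarrow> real set" where
  "code_interval P n x = {code_start P n x ..< code_start P n x + cyl_weight P n x}"

primrec decode_prefix :: "(nat \<Rightarrow> cantor \<Rightarrow> real) \<Rightarrow> real \<Rightarrow> nat \<Rightarrow> cantor" where
  "decode_prefix P u 0 = (\<lambda>_. False)"
| "decode_prefix P u (Suc n) = (decode_prefix P u n)(n :=
     code_start P n (decode_prefix P u n) +
     cyl_weight P n (decode_prefix P u n) * (1 - P n (decode_prefix P u n)) \<le> u)"

definition decode :: "(nat \<Rightarrow> cantor \<Rightarrow> real) \<Rightarrow> real \<Rightarrow> cantor" where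
  "decode P u = (\<lambda>i. decode_prefix P u (Suc i) i)"

definition coded_measure :: "(nat \<Rightarrow> cantor \<Rightarrow> real) \<Rightarrow> cantor measure" where
  "coded_measure P = distr (restrict_space lborel {0..<1}) Kborel (decode P)"

lemma code_start_Suc:
  "code_start P (Suc n) x = code_start P n x + (if x n then cyl_weight P n x * (1 - P n x) else 0)"
  by (simp add: code_start_def)

lemma prefix_determined_code_start:
  assumes P: "admissible P"
  shows "prefix_determined n (code_start P n)"
proof (rule prefix_determinedI)
  fix x y :: cantor assume xy: "\<And>i. i < n \<Longrightarrow> x i = y i"
  show "code_start P n x = code_start P n y"
    unfolding code_start_def
  proof (intro sum.cong refl)
    fix i assume i: "i \<in> {..<n}"
    then have "cyl_weight P i x = cyl_weight P i y" "P i x = P i y" "x i = y i"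
      using xy by (auto intro!: prefix_determinedD[OF prefix_determined_cyl_weight[OF P]]
        prefix_determinedD[OF admissible_prefix_determined[OF P]])
    then show "(if x i then cyl_weight P i x * (1 - P i x) else 0) =
        (if y i then cyl_weight P i y * (1 - P i y) else 0)" by simp
  qed
qed

lemma prefix_determined_code_interval:
  assumes P: "admissible P"
  shows "prefix_determined n (code_interval P n)"
proof (rule prefix_determinedI)
  fix x y :: cantor assume xy: "\<And>i. i < n \<Longrightarrow> x i = y i"
  have "code_start P n x = code_start P n y"
    using xy by (rule prefix_determinedD[OF prefix_determined_code_start[OF P]])
  moreover have "cyl_weight P n x = cyl_weight P n y"
    using xy by (rule prefix_determinedD[OF prefix_determined_cyl_weight[OF P]])
  ultimately show "code_interval P n x = code_interval P n y" by (simp add: code_interval_def)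
qed

lemma code_interval_Suc:
  assumes P: "admissible P"
  shows "code_interval P (Suc n) x = (if x n
    then {code_start P n x + cyl_weight P n x * (1 - P n x) ..< code_start P n x + cyl_weight P n x}
    else {code_start P n x ..< code_start P n x + cyl_weight P n x * (1 - P n x)})"
  by (simp add: code_interval_def code_start_Suc cyl_weight_Suc digit_prob_def algebra_simps)

lemma code_interval_Suc_subset:
  assumes P: "admissible P"
  shows "code_interval P (Suc n) x \<subseteq> code_interval P n x"
proof -
  have "0 < cyl_weight P n x" "0 < P n x" "P n x < 1"
    using P cyl_weight_pos[OF P] by (auto simp: admissible_def)
  then have "0 \<le> cyl_weight P n x * (1 - P n x)" "cyl_weight P n x * (1 - P n x) \<le> cyl_weight P n x"
    by (simp_all add: mult_left_le)
  then show ?thesis unfolding code_interval_Suc[OF P] by (auto simp: code_interval_def)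
qed

lemma code_interval_antimono:
  assumes "admissible P" "n \<le> m"
  shows "code_interval P m x \<subseteq> code_interval P n x"
  using assms(2) by (induction m rule: dec_induct) (use code_interval_Suc_subset[OF assms(1)] in blast)+

lemma code_interval_subset_unit: "admissible P \<Longrightarrow> code_interval P n x \<subseteq> {0..<1}"
  using code_interval_antimono[of P 0 n x] by (simp add: code_interval_def code_start_def)

lemma disjoint_code_interval:
  assumes P: "admissible P" and "i < n" "x i \<noteq> y i"
  shows "code_interval P n x \<inter> code_interval P n y = {}"
proof -
  obtain j where j: "x j \<noteq> y j" "\<And>k. k < j \<Longrightarrow> x k = y k" "j \<le> i"
    using exists_least_iff[of "\<lambda>j. x j \<noteq> y j"] assms(3) by (metis not_le)
  have "code_start P j x = code_start P j y"
    using j(2) by (rule prefix_determinedD[OF prefix_determined_code_start[OF P]])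
  moreover have "cyl_weight P j x = cyl_weight P j y"
    using j(2) by (rule prefix_determinedD[OF prefix_determined_cyl_weight[OF P]])
  moreover have "P j x = P j y"
    using j(2) by (rule prefix_determinedD[OF admissible_prefix_determined[OF P]])
  ultimately have "code_interval P (Suc j) x \<inter> code_interval P (Suc j) y = {}"
    using j(1) unfolding code_interval_Suc[OF P] by (cases "x j") auto
  moreover have "Suc j \<le> n" using j(3) assms(2) by simp
  ultimately show ?thesis using code_interval_antimono[OF P, of "Suc j" n] by blast
qed

lemma decode_prefix_stable: "n \<le> m \<Longrightarrow> i < n \<Longrightarrow> decode_prefix P u m i = decode_prefix P u n i"
  by (induction m rule: dec_induct) auto

lemma decode_eq_decode_prefix: "i < n \<Longrightarrow> decode P u i = decode_prefix P u n i"
  unfolding decode_def using decode_prefix_stable[of "Suc i" n i P u] by simp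

lemma mem_code_interval_decode_prefix:
  assumes P: "admissible P" and u: "u \<in> {0..<1}"
  shows "u \<in> code_interval P n (decode_prefix P u n)"
proof (induction n)
  case 0 then show ?case using u by (simp add: code_interval_def code_start_def)
next
  case (Suc n)
  let ?x = "decode_prefix P u n"
  define b where "b = (code_start P n ?x + cyl_weight P n ?x * (1 - P n ?x) \<le> u)"
  define y where "y = ?x(n := b)"
  have y: "decode_prefix P u (Suc n) = y" "y n = b"
    by (simp_all add: y_def b_def)
  have "code_start P n y = code_start P n ?x"
    unfolding y_def by (rule prefix_determined_upd[OF prefix_determined_code_start[OF P]]) simp
  moreover have "cyl_weight P n y = cyl_weight P n ?x"
    unfolding y_def by (rule prefix_determined_upd[OF prefix_determined_cyl_weight[OF P]]) simp
  moreover have "P n y = P n ?x"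
    unfolding y_def by (rule prefix_determined_upd[OF admissible_prefix_determined[OF P]]) simp
  ultimately show ?case
    using Suc unfolding y(1) code_interval_Suc[OF P] y(2) by (auto simp: b_def code_interval_def)
qed

lemma mem_code_interval_decode:
  assumes P: "admissible P" and u: "u \<in> {0..<1}"
  shows "u \<in> code_interval P n (decode P u)"
proof -
  have "code_interval P n (decode P u) = code_interval P n (decode_prefix P u n)"
    by (rule prefix_determinedD[OF prefix_determined_code_interval[OF P]])
      (simp add: decode_eq_decode_prefix)
  then show ?thesis using mem_code_interval_decode_prefix[OF assms] by simp
qed

lemma decode_vimage_cyl:
  assumes P: "admissible P"
  shows "decode P -` cyl n x \<inter> {0..<1} = code_interval P n x"
proof
  show "decode P -` cyl n x \<inter> {0..<1} \<subseteq> code_interval P n x"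
  proof
    fix u assume u: "u \<in> decode P -` cyl n x \<inter> {0..<1}"
    then have "code_interval P n (decode P u) = code_interval P n x"
      by (intro prefix_determinedD[OF prefix_determined_code_interval[OF P]]) (auto simp: cyl_def)
    then show "u \<in> code_interval P n x" using mem_code_interval_decode[OF P] u by auto
  qed
  show "code_interval P n x \<subseteq> decode P -` cyl n x \<inter> {0..<1}"
  proof
    fix u assume u: "u \<in> code_interval P n x"
    then have u01: "u \<in> {0..<1}" using code_interval_subset_unit[OF P] by blast
    have "decode P u \<in> cyl n x"
    proof (rule ccontr)
      assume "decode P u \<notin> cyl n x"
      then obtain i where "i < n" "decode P u i \<noteq> x i" by (auto simp: cyl_def)
      then have "code_interval P n (decode P u) \<inter> code_interval P n x = {}"
        by (rule disjoint_code_interval[OF P])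
      then show False using u mem_code_interval_decode[OF P u01] by auto
    qed
    then show "u \<in> decode P -` cyl n x \<inter> {0..<1}" using u01 by simp
  qed
qed

lemma code_interval_in_sets:
  "admissible P \<Longrightarrow> code_interval P n x \<in> sets (restrict_space lborel {0..<1})"
  using code_interval_subset_unit[of P n x] by (simp add: sets_restrict_space_iff code_interval_def)

lemma measurable_decode:
  assumes P: "admissible P"
  shows "decode P \<in> restrict_space lborel {0..<1} \<rightarrow>\<^sub>M Kborel"
  unfolding Kborel_def
proof (rule measurable_measure_of)
  fix U assume "U \<in> {U. openin cantor.mtopology U}"
  then have U: "U = \<Union>{C \<in> cylinders. C \<subseteq> U}" using openin_eq_Union_cylinders by blast
  have "decode P -` U \<inter> space (restrict_space lborel {0..<1}) =
      (\<Union>C\<in>{C \<in> cylinders. C \<subseteq> U}. decode P -` C \<inter> {0..<1})"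
    by (subst U) auto
  also have "\<dots> \<in> sets (restrict_space lborel {0..<1})"
  proof (rule sets.countable_UN')
    show "countable {C \<in> cylinders. C \<subseteq> U}"
      using countable_cylinders by (rule countable_subset[rotated]) auto
    show "(\<lambda>C. decode P -` C \<inter> {0..<1}) ` {C \<in> cylinders. C \<subseteq> U} \<subseteq> sets (restrict_space lborel {0..<1})"
    proof
      fix V assume "V \<in> (\<lambda>C. decode P -` C \<inter> {0..<1}) ` {C \<in> cylinders. C \<subseteq> U}"
      then obtain n w where "V = decode P -` cyl n w \<inter> {0..<1}" by (auto simp: cylinders_def)
      then show "V \<in> sets (restrict_space lborel {0..<1})"
        using decode_vimage_cyl[OF P] code_interval_in_sets[OF P] by simp
    qed
  qed
  finally show "decode P -` U \<inter> space (restrict_space lborel {0..<1})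
      \<in> sets (restrict_space lborel {0..<1})" .
qed auto

lemma sets_coded_measure [simp]: "sets (coded_measure P) = sets Kborel"
  by (simp add: coded_measure_def)

lemma prob_space_coded_measure: "admissible P \<Longrightarrow> prob_space (coded_measure P)"
  unfolding coded_measure_def
  by (intro prob_space.prob_space_distr prob_space_restrict_space measurable_decode) auto

lemma measure_coded_measure_cyl:
  assumes P: "admissible P"
  shows "measure (coded_measure P) (cyl n x) = cyl_weight P n x"
proof -
  have "emeasure (coded_measure P) (cyl n x) = emeasure (restrict_space lborel {0..<1})
      (code_interval P n x)"
    unfolding coded_measure_def
    by (subst emeasure_distr[OF measurable_decode[OF P]]) (simp_all add: decode_vimage_cyl[OF P])
  also have "\<dots> = emeasure lborel (code_interval P n x)"
    using code_interval_subset_unit[OF P]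
    by (intro emeasure_restrict_space) (auto simp: code_interval_def)
  also have "\<dots> = ennreal (cyl_weight P n x)"
    using cyl_weight_pos[OF P, of n x] by (simp add: code_interval_def)
  finally show ?thesis using cyl_weight_pos[OF P, of n x] by (simp add: measure_def)
qed

lemma measure_cyl_Suc_ratio:
  assumes P: "admissible P"
  shows "measure (coded_measure P) (cyl (Suc n) x) / measure (coded_measure P) (cyl n x) =
      digit_prob P n x"
  using cyl_weight_pos[OF P, of n x] by (simp add: measure_coded_measure_cyl[OF P] cyl_weight_Suc)

lemma doubling_coded_measure:
  assumes P: "admissible P" and c: "0 < c" "\<And>i x. c \<le> digit_prob P i x"
  shows "doubling (coded_measure P)"
  unfolding doubling_def
proof (intro exI[of _ "1 / c"] conjI allI impI)
  fix n :: nat and x assume "1 \<le> n"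
  then obtain n' where n: "n = Suc n'" by (cases n) auto
  have "cyl_weight P n' x * c \<le> cyl_weight P n' x * digit_prob P n' x"
    using c(2) cyl_weight_pos[OF P, of n' x] by (intro mult_left_mono) auto
  then show "measure (coded_measure P) (cyl (n - 1) x) \<le> 1 / c * measure (coded_measure P) (cyl n x)"
    using c(1) by (simp add: n measure_coded_measure_cyl[OF P] cyl_weight_Suc field_simps)
qed (use c in simp)

lemma measure_coded_measure_Collect:
  assumes P: "admissible P" and Q: "prefix_determined n Q"
  shows "measure (coded_measure P) {x. Q x} = expect P n (\<lambda>x. of_bool (Q x))"
proof -
  interpret prob_space "coded_measure P" by (rule prob_space_coded_measure[OF P])
  have "measure (coded_measure P) {x. Q x} = measure (coded_measure P) (\<Union>w\<in>words n \<inter> {x. Q x}. cyl n w)"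
    using prefix_determined_eq_Union_cyl[of n "{x. Q x}"] Q by simp
  also have "\<dots> = (\<Sum>w\<in>words n \<inter> {x. Q x}. measure (coded_measure P) (cyl n w))"
    using disjoint_cyl_words by (intro measure_finite_Union) (auto simp: disjoint_family_on_def)
  also have "\<dots> = expect P n (\<lambda>x. of_bool (Q x))"
    by (simp add: measure_coded_measure_cyl[OF P] expect_def sum.inter_restrict of_bool_def if_distrib
      cong: if_cong)
  finally show ?thesis .
qed

lemma borel_prob_coded_measure: "admissible P \<Longrightarrow> borel_prob (coded_measure P)"
  by (simp add: borel_prob_def prob_space_coded_measure)

section \<open>A Chernoff bound\<close>

definition count_digit :: "bool \<Rightarrow> nat \<Rightarrow> nat \<Rightarrow> cantor \<Rightarrow> nat" where
  "count_digit b a l x = card {i \<in> {a..<a+l}. x i = b}"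

lemma count_digit_0 [simp]: "count_digit b a 0 x = 0"
  by (simp add: count_digit_def)

lemma count_digit_Suc:
  "count_digit b a (Suc l) x = count_digit b a l x + (if x (a+l) = b then 1 else 0)"
proof -
  have "{i \<in> {a..<a + Suc l}. x i = b} =
      {i \<in> {a..<a+l}. x i = b} \<union> (if x (a+l) = b then {a+l} else {})"
    by (auto simp: less_Suc_eq)
  then show ?thesis by (auto simp: count_digit_def)
qed

lemma count_digit_True_False: "count_digit True a l x + count_digit False a l x = l"
  by (induction l) (auto simp: count_digit_Suc)

lemma prefix_determined_count_digit: "prefix_determined (a + l) (count_digit b a l)"
proof (rule prefix_determinedI)
  fix x y :: cantor assume "\<And>i. i < a + l \<Longrightarrow> x i = y i"
  then have "{i \<in> {a..<a+l}. x i = b} = {i \<in> {a..<a+l}. y i = b}" by auto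
  then show "count_digit b a l x = count_digit b a l y" by (simp add: count_digit_def)
qed

lemma expect_pow_count_digit:
  assumes P: "admissible P" and g: "prefix_determined a g"
    and r: "\<And>i x. a \<le> i \<Longrightarrow> i < a + l \<Longrightarrow> g x \<noteq> 0 \<Longrightarrow> P i x = (if b then r else 1 - r)"
  shows "expect P (a + l) (\<lambda>x. g x * lam ^ count_digit b a l x) = (1 - r + r * lam) ^ l * expect P a g"
  using r
proof (induction l)
  case (Suc l)
  define h where "h x = g x * lam ^ count_digit b a l x" for x
  have h: "prefix_determined (a + l) h"
  proof (rule prefix_determinedI)
    fix x y :: cantor assume xy: "\<And>i. i < a + l \<Longrightarrow> x i = y i"
    have "g x = g y" using xy by (intro prefix_determinedD[OF g]) simp
    moreover have "count_digit b a l x = count_digit b a l y"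
      using xy by (rule prefix_determinedD[OF prefix_determined_count_digit])
    ultimately show "h x = h y" by (simp add: h_def)
  qed
  have "expect P (a + Suc l) (\<lambda>x. g x * lam ^ count_digit b a (Suc l) x) =
      expect P (Suc (a + l)) (\<lambda>x. h x * (if x (a + l) = b then lam else 1))"
    unfolding add_Suc_right
    by (intro arg_cong[where f="expect P (Suc (a + l))"] ext) (simp add: h_def count_digit_Suc power_add)
  also have "\<dots> = expect P (a + l) (\<lambda>x. (1 - r + r * lam) * h x)"
    unfolding expect_Suc_digit[OF P h, where c="\<lambda>d. if d = b then lam else 1"]
    by (intro arg_cong[where f="expect P (a + l)"] ext) (use Suc.prems in \<open>auto simp: h_def\<close>)
  finally show ?case using Suc by (simp add: expect_cmult h_def)
qed simp

lemma expect_count_digit_tail: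
  assumes P: "admissible P" and g: "prefix_determined a g" "\<And>x. 0 \<le> g x"
    and r: "\<And>i x. a \<le> i \<Longrightarrow> i < a + l \<Longrightarrow> g x \<noteq> 0 \<Longrightarrow> P i x = (if b then r else 1 - r)"
    and lam: "1 \<le> lam"
  shows "expect P (a + l) (\<lambda>x. if j \<le> count_digit b a l x then g x else 0)
    \<le> (1 - r + r * lam) ^ l / lam ^ j * expect P a g"
proof -
  have "expect P (a + l) (\<lambda>x. if j \<le> count_digit b a l x then g x else 0)
      \<le> expect P (a + l) (\<lambda>x. (1 / lam ^ j) * (g x * lam ^ count_digit b a l x))"
  proof (rule expect_mono[OF P])
    fix x
    have "j \<le> count_digit b a l x \<Longrightarrow> lam ^ j \<le> lam ^ count_digit b a l x"
      using lam by (simp add: power_increasing)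
    then show "(if j \<le> count_digit b a l x then g x else 0)
        \<le> (1 / lam ^ j) * (g x * lam ^ count_digit b a l x)"
      using g(2)[of x] lam by (auto simp: field_simps mult_left_mono)
  qed
  also have "\<dots> = (1 / lam ^ j) * expect P (a + l) (\<lambda>x. g x * lam ^ count_digit b a l x)"
    by (rule expect_cmult)
  also have "\<dots> = (1 - r + r * lam) ^ l / lam ^ j * expect P a g"
    by (simp add: expect_pow_count_digit[OF P g(1) r])
  finally show ?thesis .
qed

lemma expect_count_digit_half:
  assumes P: "admissible P" and g: "prefix_determined a g" "\<And>x. 0 \<le> g x"
    and eta: "0 < eta" "eta < 1/2"
    and r: "\<And>i x. a \<le> i \<Longrightarrow> i < a + 2 * m \<Longrightarrow> g x \<noteq> 0 \<Longrightarrow>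
      P i x = (if b then 1/2 - eta else 1/2 + eta)"
  shows "expect P (a + 2 * m) (\<lambda>x. if m \<le> count_digit b a (2 * m) x then g x else 0)
    \<le> (1 - 4 * eta^2) ^ m * expect P a g"
proof -
  define lam where "lam = (1 + 2 * eta) / (1 - 2 * eta)"
  have lam: "1 \<le> lam" "0 < lam" using eta by (simp_all add: lam_def field_simps)
  have r': "\<And>i x. a \<le> i \<Longrightarrow> i < a + 2 * m \<Longrightarrow> g x \<noteq> 0 \<Longrightarrow>
      P i x = (if b then 1/2 - eta else 1 - (1/2 - eta))"
    using r by simp
  have s: "1 - (1/2 - eta) + (1/2 - eta) * lam = 1 + 2 * eta"
    using eta by (simp add: lam_def field_simps)
  have "(1 + 2 * eta) ^ 2 = lam * (1 - 4 * eta^2)"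
    using eta by (simp add: lam_def field_simps power2_eq_square)
  then have "(1 + 2 * eta) ^ (2 * m) = lam ^ m * (1 - 4 * eta^2) ^ m"
    by (simp add: power_mult power_mult_distrib)
  then show ?thesis
    using expect_count_digit_tail[where l="2 * m" and j=m, OF P g r' lam(1)] lam(2) unfolding s by simp
qed

lemma cyl_weight_const_window:
  assumes "\<And>i. a \<le> i \<Longrightarrow> i < a + l \<Longrightarrow> P i x = q"
  shows "cyl_weight P (a + l) x =
    cyl_weight P a x * q ^ count_digit True a l x * (1 - q) ^ count_digit False a l x"
  using assms
proof (induction l)
  case (Suc l)
  then have "P (a + l) x = q" by simp
  with Suc show ?case
    by (cases "x (a + l)") (simp_all add: cyl_weight_Suc digit_prob_def count_digit_Suc)
qed simp

section \<open>Hausdorff dimension on the Cantor space\<close>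

lemma half_pow_powr: "((1/2::real)^k) powr t = ((1/2) powr t)^k"
proof -
  have "((1/2::real)^k) powr t = ((1/2) powr (real k)) powr t" by (simp add: powr_realpow)
  also have "\<dots> = ((1/2) powr t)^k" by (simp add: powr_powr powr_power mult.commute)
  finally show ?thesis .
qed

lemma cdist_bdd_above: "bdd_above {cdist x y | x y. x \<in> A \<and> y \<in> A}"
  by (rule bdd_aboveI[of _ 1]) (auto simp: cdist_le_1)

lemma cdist_le_cdiam: "y \<in> U \<Longrightarrow> z \<in> U \<Longrightarrow> cdist y z \<le> cdiam U"
  unfolding cdiam_def by (auto intro!: cSup_upper cdist_bdd_above)

lemma cdiam_le:
  assumes "\<And>y z. y \<in> U \<Longrightarrow> z \<in> U \<Longrightarrow> cdist y z \<le> c" "0 \<le> c"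
  shows "cdiam U \<le> c"
proof (cases "U = {}")
  case False
  then have "{cdist x y | x y. x \<in> U \<and> y \<in> U} \<noteq> {}" by auto
  then have "Sup {cdist x y | x y. x \<in> U \<and> y \<in> U} \<le> c"
    by (rule cSup_least) (use assms(1) in blast)
  then show ?thesis unfolding cdiam_def using False by simp
qed (simp add: cdiam_def assms(2))

lemma cdiam_empty [simp]: "cdiam {} = 0"
  by (simp add: cdiam_def)

lemma cdiam_nonneg: "0 \<le> cdiam U"
proof (cases "U = {}")
  case False
  then obtain y where "y \<in> U" by auto
  then show ?thesis using cdist_le_cdiam[of y U y] cdist_nonneg[of y y] by linarith
qed (simp add: cdiam_def)

lemma cdiam_le_1: "cdiam U \<le> 1"
  by (rule cdiam_le) (auto simp: cdist_le_1)

lemma cdiam_cyl_le: "cdiam (cyl n x) \<le> (1/2)^n"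
  by (rule cdiam_le) (auto simp: cyl_def cdist_le_half_pow_iff)

lemma hausdorff_delta_le_finite_cover:
  assumes "finite \<U>" "E \<subseteq> \<Union>\<U>" "\<And>U. U \<in> \<U> \<Longrightarrow> cdiam U \<le> \<delta>" "0 \<le> \<delta>"
  shows "hausdorff_delta s \<delta> E \<le> ennreal (\<Sum>U\<in>\<U>. cdiam U powr s)"
proof -
  obtain h where h: "bij_betw h {..<card \<U>} \<U>"
    using ex_bij_betw_nat_finite[OF assms(1)] by (auto simp: atLeast0LessThan)
  define V where "V i = (if i < card \<U> then h i else {})" for i
  have "E \<subseteq> (\<Union>i. V i)"
  proof
    fix x assume "x \<in> E"
    then obtain U where U: "U \<in> \<U>" "x \<in> U" using assms(2) by blast
    then obtain i where "i < card \<U>" "h i = U"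
      using bij_betw_imp_surj_on[OF h] by (metis imageE lessThan_iff)
    then show "x \<in> (\<Union>i. V i)" using U by (auto simp: V_def)
  qed
  moreover have "cdiam (V i) \<le> \<delta>" for i
    using assms(3,4) bij_betw_apply[OF h, of i] by (auto simp: V_def)
  ultimately have "hausdorff_delta s \<delta> E \<le> (\<Sum>i. ennreal (cdiam (V i) powr s))"
    unfolding hausdorff_delta_def by (intro INF_lower) auto
  also have "\<dots> = (\<Sum>i<card \<U>. ennreal (cdiam (h i) powr s))"
    by (subst suminf_finite[of "{..<card \<U>}"]) (auto simp: V_def)
  also have "\<dots> = ennreal (\<Sum>U\<in>\<U>. cdiam U powr s)"
    using sum.reindex_bij_betw[OF h, of "\<lambda>U. ennreal (cdiam U powr s)"] by simp
  finally show ?thesis .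
qed

lemma hausdorff_measure_eq_0_cyl_covers:
  assumes "0 \<le> s"
    and covers: "\<And>e n0. 0 < e \<Longrightarrow>
      \<exists>N\<ge>n0. \<exists>H\<subseteq>words N. E \<subseteq> \<Union>(cyl N ` H) \<and> card H * ((1/2)^N) powr s \<le> e"
  shows "hausdorff_measure s E = 0"
proof -
  have small_delta: "hausdorff_delta s \<delta> E \<le> ennreal e" if "0 < \<delta>" "0 < e" for \<delta> e
  proof -
    obtain n0 where n0: "(1/2::real)^n0 < \<delta>" using real_arch_pow_inv[of \<delta> "1/2"] \<open>0 < \<delta>\<close> by auto
    obtain N H where N: "n0 \<le> N" "H \<subseteq> words N" "E \<subseteq> \<Union>(cyl N ` H)"
      and small: "card H * ((1/2)^N) powr s \<le> e"
      using covers[OF \<open>0 < e\<close>, of n0] by blast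
    have fin: "finite H" using N(2) finite_words by (rule finite_subset)
    have diam: "cdiam (cyl N w) \<le> (1/2)^N" for w by (rule cdiam_cyl_le)
    have "(1/2::real)^N \<le> (1/2)^n0" using N(1) by (simp add: power_decreasing)
    then have "cdiam (cyl N w) \<le> \<delta>" for w using diam[of w] n0 by linarith
    then have "hausdorff_delta s \<delta> E \<le> ennreal (\<Sum>U\<in>cyl N ` H. cdiam U powr s)"
      using N(3) fin that(1) by (intro hausdorff_delta_le_finite_cover) auto
    also have "(\<Sum>U\<in>cyl N ` H. cdiam U powr s) \<le> (\<Sum>w\<in>H. cdiam (cyl N w) powr s)"
      using sum_image_le[OF fin, of "\<lambda>U. cdiam U powr s" "cyl N"] by (simp add: o_def)
    also have "\<dots> \<le> (\<Sum>w\<in>H. ((1/2)^N) powr s)"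
      using diam assms(1) by (intro sum_mono powr_mono2) (auto simp: cdiam_nonneg)
    also have "\<dots> \<le> e" using small by simp
    finally show ?thesis by (simp add: ennreal_leI)
  qed
  have "hausdorff_delta s \<delta> E = 0" if "0 < \<delta>" for \<delta>
  proof -
    have "hausdorff_delta s \<delta> E \<le> 0"
      by (rule ennreal_le_epsilon) (use small_delta[OF that] in simp)
    then show ?thesis by simp
  qed
  then show ?thesis unfolding hausdorff_measure_def by simp
qed

lemma hausdorff_measure_2_eq_0: "hausdorff_measure 2 E = 0"
proof (rule hausdorff_measure_eq_0_cyl_covers)
  fix e :: real and n0 :: nat assume "0 < e"
  obtain n where n: "(1/2::real)^n < e" using real_arch_pow_inv[of e "1/2"] \<open>0 < e\<close> by auto
  define N where "N = max n n0"
  have "real (card (words N)) \<le> 2^N"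
    using card_words_le[of N] by (metis of_nat_le_iff of_nat_numeral of_nat_power)
  then have "card (words N) * ((1/2::real)^N) powr 2 \<le> 2^N * ((1/2)^N)^2"
    by (simp add: powr_numeral mult_right_mono)
  also have "\<dots> = (1/2)^N"
    by (simp add: power2_eq_square power_mult_distrib[symmetric] mult.assoc[symmetric])
  also have "\<dots> \<le> (1/2)^n" by (simp add: N_def power_decreasing)
  finally have "card (words N) * ((1/2::real)^N) powr 2 \<le> e" using n by linarith
  moreover have "E \<subseteq> \<Union>(cyl N ` words N)" using mem_cyl_trunc trunc_in_words by blast
  ultimately show "\<exists>N\<ge>n0. \<exists>H\<subseteq>words N. E \<subseteq> \<Union>(cyl N ` H) \<and> card H * ((1/2)^N) powr 2 \<le> e"
    by (intro exI[of _ N] conjI exI[of _ "words N"]) (auto simp: N_def)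
qed simp

lemma hausdorff_dim_nonneg: "0 \<le> hausdorff_dim E"
  unfolding hausdorff_dim_def using hausdorff_measure_2_eq_0[of E]
  by (intro cInf_greatest) (auto intro!: exI[of _ 2])

lemma hausdorff_dim_le: "0 \<le> s \<Longrightarrow> hausdorff_measure s E = 0 \<Longrightarrow> hausdorff_dim E \<le> s"
  unfolding hausdorff_dim_def by (rule cInf_lower) (auto intro: bdd_belowI[of _ 0])

lemma hausdorff_dim_ge:
  "(\<And>s. 0 \<le> s \<Longrightarrow> s < c \<Longrightarrow> hausdorff_measure s E \<noteq> 0) \<Longrightarrow> c \<le> hausdorff_dim E"
  unfolding hausdorff_dim_def using hausdorff_measure_2_eq_0[of E]
  by (intro cInf_greatest) (auto simp: not_less[symmetric] intro!: exI[of _ 2])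

lemma lower_dim_le_hausdorff_dim:
  "E \<in> sets m \<Longrightarrow> 0 < emeasure m E \<Longrightarrow> lower_dim m \<le> hausdorff_dim E"
  unfolding lower_dim_def by (rule cInf_lower) (auto intro: bdd_belowI[of _ 0] hausdorff_dim_nonneg)

lemma lower_dim_ge:
  assumes "prob_space m" "\<And>E. E \<in> sets m \<Longrightarrow> 0 < emeasure m E \<Longrightarrow> c \<le> hausdorff_dim E"
  shows "c \<le> lower_dim m"
proof -
  have "space m \<in> sets m" "0 < emeasure m (space m)"
    using prob_space.emeasure_space_1[OF assms(1)] by auto
  then show ?thesis unfolding lower_dim_def using assms(2) by (intro cInf_greatest) auto
qed

lemma exists_cyl_cover:
  assumes "y \<in> U" "0 < cdiam U"
  obtains k where "U \<subseteq> cyl k y" "(1/2)^k < 2 * cdiam U"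
proof -
  let ?d = "cdiam U"
  obtain n where "(1/2::real)^n < ?d" using real_arch_pow_inv[OF assms(2), of "1/2"] by auto
  then have "\<exists>k. (1/2::real)^Suc k < ?d"
    using assms(2) by (intro exI[of _ n]) simp
  then obtain k where k: "(1/2::real)^Suc k < ?d" "\<And>j. j < k \<Longrightarrow> \<not> (1/2::real)^Suc j < ?d"
    using exists_least_iff[of "\<lambda>k. (1/2::real)^Suc k < ?d"] by blast
  have "?d \<le> (1/2)^k"
  proof (cases k)
    case 0 then show ?thesis using cdiam_le_1 by simp
  next
    case (Suc j) then show ?thesis using k(2)[of j] by simp
  qed
  then have "U \<subseteq> cyl k y" using assms(1) cdist_le_cdiam by (fastforce simp: mem_cyl_iff)
  moreover have "(1/2::real)^k < 2 * ?d" using k(1) by simp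
  ultimately show ?thesis using that by blast
qed

context
  fixes m :: "cantor measure" and C t :: real
  assumes m: "prob_space m" "sets m = sets Kborel"
    and C: "0 < C" and t: "0 < t" "t \<le> 1"
begin

lemma measure_singleton_eq_0:
  assumes bnd: "\<And>k. measure m (cyl k y) \<le> C * ((1/2)^k) powr t"
  shows "measure m {y} = 0"
proof -
  interpret prob_space m by (rule m(1))
  have "measure m {y} \<le> e" if "0 < e" for e
  proof -
    have "(1/2) powr t < (1::real)" using powr_less_mono2[of t "1/2" 1] t by simp
    then obtain k where "((1/2) powr t)^k < e / C"
      using real_arch_pow_inv[of "e / C" "(1/2) powr t"] \<open>0 < e\<close> C by auto
    then have "C * ((1/2)^k) powr t < e"
      using C unfolding half_pow_powr by (simp add: field_simps)
    moreover have "measure m {y} \<le> measure m (cyl k y)"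
      by (rule finite_measure_mono) (simp_all add: m(2))
    ultimately show ?thesis using bnd[of k] by linarith
  qed
  then have "measure m {y} \<le> 0" by (rule field_le_epsilon) simp
  then show ?thesis using measure_nonneg[of m "{y}"] by linarith
qed

lemma measure_cyl_cover_le:
  assumes bnd: "\<And>k. measure m (cyl k y) \<le> C * ((1/2)^k) powr t"
    and U: "y \<in> U" "0 < cdiam U" and s: "0 \<le> s" "s \<le> t"
  obtains k where "U \<subseteq> cyl k y" "measure m (cyl k y) \<le> 2 * C * cdiam U powr s"
proof -
  let ?d = "cdiam U"
  obtain k where k: "U \<subseteq> cyl k y" "(1/2)^k < 2 * ?d" using exists_cyl_cover[OF U] .
  have "((1/2)^k) powr t \<le> (2 * ?d) powr t"
    using k(2) t by (intro powr_mono2) auto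
  then have "C * ((1/2)^k) powr t \<le> C * (2 * ?d) powr t"
    using C by (intro mult_left_mono) auto
  then have "measure m (cyl k y) \<le> C * (2 * ?d) powr t"
    using bnd[of k] by linarith
  also have "\<dots> = C * (2 powr t * ?d powr t)" using U(2) by (simp add: powr_mult)
  also have "\<dots> \<le> C * (2 * ?d powr s)"
  proof -
    have "2 powr t \<le> (2::real)" using powr_mono[of t 1 2] t by simp
    moreover have "?d powr t \<le> ?d powr s" using U(2) cdiam_le_1[of U] s by (intro powr_mono') auto
    ultimately show ?thesis using C by (intro mult_left_mono mult_mono) auto
  qed
  finally have "measure m (cyl k y) \<le> 2 * C * ?d powr s" by (simp add: ac_simps)
  then show ?thesis using k(1) that by blast
qed

lemma mass_distribution_cover:
  assumes bnd: "\<And>y k. y \<in> E' \<Longrightarrow> measure m (cyl k y) \<le> C * ((1/2)^k) powr t"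
    and s: "0 \<le> s" "s \<le> t"
  shows "\<exists>V\<in>sets m. U \<inter> E' \<subseteq> V \<and> emeasure m V \<le> ennreal (2 * C) * ennreal (cdiam U powr s)"
proof (cases "U \<inter> E' = {}")
  case False
  interpret prob_space m by (rule m(1))
  obtain y where y: "y \<in> U" "y \<in> E'" using False by blast
  show ?thesis
  proof (cases "cdiam U = 0")
    case True
    have "U \<subseteq> {y}"
    proof
      fix z assume "z \<in> U"
      then have "cdist y z \<le> 0" using cdist_le_cdiam[OF y(1)] True by fastforce
      then show "z \<in> {y}" using cdist_nonneg[of y z] cdist_eq_0_iff[of y z] by simp
    qed
    moreover have "measure m {y} = 0" using bnd[OF y(2)] by (rule measure_singleton_eq_0)
    moreover have "{y} \<in> sets m" using m(2) singleton_in_Kborel by simp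
    ultimately show ?thesis by (intro bexI[of _ "{y}"]) (auto simp: emeasure_eq_measure)
  next
    case False
    then have "0 < cdiam U" using cdiam_nonneg[of U] by linarith
    then obtain k where k: "U \<subseteq> cyl k y" "measure m (cyl k y) \<le> 2 * C * cdiam U powr s"
      using measure_cyl_cover_le[OF bnd[OF y(2)] y(1) _ s] by blast
    then have "emeasure m (cyl k y) \<le> ennreal (2 * C) * ennreal (cdiam U powr s)"
      using C by (simp add: emeasure_eq_measure ennreal_mult[symmetric])
    moreover have "cyl k y \<in> sets m" using m(2) by simp
    ultimately show ?thesis using k(1) by (intro bexI[of _ "cyl k y"]) auto
  qed
qed (intro bexI[of _ "{}"]; simp)

lemma mass_distribution_cover_sum:
  assumes E': "E' \<in> sets m" "E' \<subseteq> E"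
    and bnd: "\<And>y k. y \<in> E' \<Longrightarrow> measure m (cyl k y) \<le> C * ((1/2)^k) powr t"
    and s: "0 \<le> s" "s \<le> t" and cover: "E \<subseteq> (\<Union>i. U i)"
  shows "ennreal (measure m E') \<le> ennreal (2 * C) * (\<Sum>i. ennreal (cdiam (U i) powr s))"
proof -
  interpret prob_space m by (rule m(1))
  have "\<forall>i. \<exists>V\<in>sets m. U i \<inter> E' \<subseteq> V \<and> emeasure m V \<le> ennreal (2 * C) * ennreal (cdiam (U i) powr s)"
    by (intro allI mass_distribution_cover) (use bnd s in auto)
  then obtain V where V: "\<And>i. V i \<in> sets m" "\<And>i. U i \<inter> E' \<subseteq> V i"
    "\<And>i. emeasure m (V i) \<le> ennreal (2 * C) * ennreal (cdiam (U i) powr s)"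
    by metis
  have "E' \<subseteq> (\<Union>i. V i)" using cover E'(2) V(2) by blast
  moreover have "(\<Union>i. V i) \<in> sets m" by (rule sets.countable_UN) (use V(1) in blast)
  ultimately have "ennreal (measure m E') \<le> emeasure m (\<Union>i. V i)"
    by (simp add: emeasure_mono emeasure_eq_measure[symmetric])
  also have "\<dots> \<le> (\<Sum>i. emeasure m (V i))" using V(1) by (intro emeasure_subadditive_countably) auto
  also have "\<dots> \<le> (\<Sum>i. ennreal (2 * C) * ennreal (cdiam (U i) powr s))" by (intro suminf_le V(3)) auto
  finally show ?thesis by simp
qed

lemma mass_distribution_principle:
  assumes E': "E' \<in> sets m" "E' \<subseteq> E" "0 < measure m E'"
    and bnd: "\<And>y k. y \<in> E' \<Longrightarrow> measure m (cyl k y) \<le> C * ((1/2)^k) powr t"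
    and s: "0 \<le> s" "s \<le> t"
  shows "hausdorff_measure s E \<noteq> 0"
proof -
  have "ennreal (measure m E' / (2 * C)) \<le> hausdorff_delta s 1 E"
    unfolding hausdorff_delta_def
  proof (rule INF_greatest)
    fix U :: "nat \<Rightarrow> cantor set" assume "U \<in> {U. E \<subseteq> (\<Union>i. U i) \<and> (\<forall>i. cdiam (U i) \<le> 1)}"
    then have cover: "E \<subseteq> (\<Union>i. U i)" by simp
    have "ennreal (measure m E') \<le> ennreal (2 * C) * (\<Sum>i. ennreal (cdiam (U i) powr s))"
      by (rule mass_distribution_cover_sum[where E'=E' and E=E]) (use E' bnd s cover in auto)
    then have "ennreal (1 / (2 * C)) * ennreal (measure m E')
        \<le> ennreal (1 / (2 * C)) * (ennreal (2 * C) * (\<Sum>i. ennreal (cdiam (U i) powr s)))"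
      by (rule mult_left_mono) simp
    then show "ennreal (measure m E' / (2 * C)) \<le> (\<Sum>i. ennreal (cdiam (U i) powr s))"
      using C by (simp add: ennreal_mult[symmetric] mult.assoc[symmetric])
  qed
  also have "\<dots> \<le> hausdorff_measure s E"
    unfolding hausdorff_measure_def by (rule SUP_upper) auto
  finally show ?thesis using E'(3) C by (auto simp: ennreal_zero_less_divide)
qed

end

lemma nine_sixteenths_pow_le: "(9/16::real)^k \<le> ((1/2)^k) powr (4/5)"
proof -
  have "ln ((9/16::real)^5) \<le> ln ((1/2)^4)" by (subst ln_le_cancel_iff) (simp_all add: power_divide)
  then have "ln (9/16::real) \<le> 4/5 * ln (1/2)" by (simp add: ln_realpow)
  then have "exp (ln (9/16::real)) \<le> exp (4/5 * ln (1/2))" by (simp only: exp_le_cancel_iff)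
  then have "(9/16::real) \<le> (1/2) powr (4/5)" by (simp add: powr_def)
  then show ?thesis unfolding half_pow_powr by (intro power_mono) auto
qed

section \<open>The block construction\<close>

definition theta :: real where
  "theta = 1/256"

text \<open>Block \<open>k\<close> occupies the digits \<open>[block_start k, block_start (k + 1))\<close>: a test window of
  \<open>2 * test_len k\<close> digits, followed by an entropy window of \<open>32 * entropy_len k\<close> digits.
  The entropy window is long enough to dominate all earlier digits (\<open>4 * test_end k \<le> entropy_len k\<close>),
  and \<open>k + 3 \<le> entropy_len k\<close> makes the exceptional probabilities of block \<open>k\<close> summable.\<close>
locale blocks =
  fixes m0 :: nat
begin

definition test_len :: "nat \<Rightarrow> nat" where
  "test_len k = m0 * (k + 3)"

primrec block_start :: "nat \<Rightarrow> nat" where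
  "block_start 0 = 0"
| "block_start (Suc k) =
    (block_start k + 2 * test_len k) + 32 * (4 * (block_start k + 2 * test_len k) + k + 3)"

definition test_end :: "nat \<Rightarrow> nat" where
  "test_end k = block_start k + 2 * test_len k"

definition entropy_len :: "nat \<Rightarrow> nat" where
  "entropy_len k = 4 * test_end k + k + 3"

lemma block_start_Suc: "block_start (Suc k) = test_end k + 32 * entropy_len k"
  by (simp add: test_end_def entropy_len_def)

declare block_start.simps(2) [simp del]

lemma block_start_le_test_end: "block_start k \<le> test_end k"
  by (simp add: test_end_def)

lemma test_end_le_block_start_Suc: "test_end k \<le> block_start (Suc k)"
  by (simp add: block_start_Suc)

lemma strict_mono_block_start: "strict_mono block_start"
  by (rule strict_monoI_Suc) (simp add: block_start_Suc entropy_len_def test_end_def)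

lemma block_start_mono: "k \<le> k' \<Longrightarrow> block_start k \<le> block_start k'"
  using strict_mono_block_start strict_mono_less_eq by blast

lemma le_block_start: "k \<le> block_start k"
  using strict_mono_block_start by (rule strict_mono_imp_increasing)

lemma test_end_mono: "j \<le> k \<Longrightarrow> test_end j \<le> test_end k"
  unfolding test_end_def test_len_def by (intro add_mono block_start_mono) simp_all

definition block_of :: "nat \<Rightarrow> nat" where
  "block_of i = (LEAST k. i < block_start (Suc k))"

lemma block_of_bounds: "block_start (block_of i) \<le> i" "i < block_start (Suc (block_of i))"
proof -
  have ex: "\<exists>k. i < block_start (Suc k)"
    using le_block_start[of "Suc i"] by (intro exI[of _ i]) simp
  show "i < block_start (Suc (block_of i))" unfolding block_of_def by (rule LeastI_ex[OF ex])
  show "block_start (block_of i) \<le> i"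
  proof (cases "block_of i")
    case (Suc j)
    then have "\<not> i < block_start (Suc j)"
      using not_less_Least[of j "\<lambda>k. i < block_start (Suc k)"] unfolding block_of_def by simp
    then show ?thesis using Suc by simp
  qed simp
qed

lemma block_of_eqI:
  assumes "block_start k \<le> i" "i < block_start (Suc k)"
  shows "block_of i = k"
proof (rule ccontr)
  assume "block_of i \<noteq> k"
  then consider "Suc (block_of i) \<le> k" | "Suc k \<le> block_of i" by linarith
  then show False
  proof cases
    case 1
    then show False using assms(1) block_of_bounds(2)[of i] block_start_mono[of "Suc (block_of i)" k]
      by simp
  next
    case 2
    then show False using assms(2) block_of_bounds(1)[of i] block_start_mono[of "Suc k" "block_of i"]
      by simp
  qed
qed

definition passes_test :: "nat \<Rightarrow> cantor \<Rightarrow> bool" where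
  "passes_test k x \<longleftrightarrow> test_len k \<le> count_digit True (block_start k) (2 * test_len k) x"

definition passes_all :: "nat \<Rightarrow> cantor \<Rightarrow> bool" where
  "passes_all k x \<longleftrightarrow> (\<forall>j<k. passes_test j x)"

definition sparse_entropy :: "nat \<Rightarrow> cantor \<Rightarrow> bool" where
  "sparse_entropy k x \<longleftrightarrow> count_digit True (test_end k) (32 * entropy_len k) x < entropy_len k"

definition block_prob :: "real \<Rightarrow> nat \<Rightarrow> cantor \<Rightarrow> real" where
  "block_prob p i x = (if i < test_end (block_of i) then p
     else if passes_all (Suc (block_of i)) x then theta else 1/2)"

lemma passes_all_Suc: "passes_all (Suc k) x \<longleftrightarrow> passes_all k x \<and> passes_test k x"
  by (auto simp: passes_all_def less_Suc_eq)

lemma passes_all_antimono: "k \<le> k' \<Longrightarrow> passes_all k' x \<Longrightarrow> passes_all k x"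
  by (simp add: passes_all_def)

lemma prefix_determined_passes_test: "prefix_determined (test_end k) (passes_test k)"
proof (rule prefix_determinedI)
  fix x y :: cantor assume "\<And>i. i < test_end k \<Longrightarrow> x i = y i"
  then have "count_digit True (block_start k) (2 * test_len k) x =
      count_digit True (block_start k) (2 * test_len k) y"
    by (intro prefix_determinedD[OF prefix_determined_count_digit]) (simp add: test_end_def)
  then show "passes_test k x = passes_test k y" by (simp add: passes_test_def)
qed

lemma prefix_determined_sparse_entropy: "prefix_determined (block_start (Suc k)) (sparse_entropy k)"
proof (rule prefix_determinedI)
  fix x y :: cantor assume "\<And>i. i < block_start (Suc k) \<Longrightarrow> x i = y i"
  then have "count_digit True (test_end k) (32 * entropy_len k) x =
      count_digit True (test_end k) (32 * entropy_len k) y"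
    by (intro prefix_determinedD[OF prefix_determined_count_digit]) (simp add: block_start_Suc)
  then show "sparse_entropy k x = sparse_entropy k y" by (simp add: sparse_entropy_def)
qed

lemma prefix_determined_passes_all:
  assumes "\<And>j. j < k \<Longrightarrow> test_end j \<le> n"
  shows "prefix_determined n (passes_all k)"
proof (rule prefix_determinedI)
  fix x y :: cantor assume xy: "\<And>i. i < n \<Longrightarrow> x i = y i"
  have "passes_test j x = passes_test j y" if "j < k" for j
    using xy assms[OF that] by (intro prefix_determinedD[OF prefix_determined_passes_test]) simp
  then show "passes_all k x = passes_all k y" by (simp add: passes_all_def)
qed

lemma test_end_le_block_start: "j < k \<Longrightarrow> test_end j \<le> block_start k"
  using test_end_le_block_start_Suc[of j] block_start_mono[of "Suc j" k] by simp

lemma prefix_determined_passes_all_block_start: "prefix_determined (block_start k) (passes_all k)"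
  by (rule prefix_determined_passes_all) (rule test_end_le_block_start)

lemma admissible_block_prob: "0 < p \<Longrightarrow> p < 1 \<Longrightarrow> admissible (block_prob p)"
  unfolding admissible_def
proof (intro conjI allI)
  fix i
  show "prefix_determined i (block_prob p i)"
  proof (rule prefix_determinedI)
    fix x y :: cantor assume xy: "\<And>j. j < i \<Longrightarrow> x j = y j"
    have "passes_all (Suc (block_of i)) x = passes_all (Suc (block_of i)) y"
      if "\<not> i < test_end (block_of i)"
    proof (rule prefix_determinedD[OF prefix_determined_passes_all])
      show "\<And>j. j < Suc (block_of i) \<Longrightarrow> test_end j \<le> test_end (block_of i)" by (simp add: test_end_mono)
      show "\<And>j. j < test_end (block_of i) \<Longrightarrow> x j = y j" using xy that by simp
    qed
    then show "block_prob p i x = block_prob p i y" by (simp add: block_prob_def)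
  qed
qed (auto simp: block_prob_def theta_def)

lemma block_prob_test: "block_start k \<le> i \<Longrightarrow> i < test_end k \<Longrightarrow> block_prob p i x = p"
  using block_of_eqI[of k i] test_end_le_block_start_Suc[of k] by (simp add: block_prob_def)

lemma block_prob_entropy:
  "test_end k \<le> i \<Longrightarrow> i < block_start (Suc k) \<Longrightarrow>
    block_prob p i x = (if passes_all (Suc k) x then theta else 1/2)"
  using block_of_eqI[of k i] block_start_le_test_end[of k] by (simp add: block_prob_def)

lemma theta_le_digit_prob_block_prob:
  "1/4 \<le> p \<Longrightarrow> p \<le> 3/4 \<Longrightarrow> theta \<le> digit_prob (block_prob p) i x"
  by (auto simp: digit_prob_def block_prob_def theta_def)

lemma doubling_block_prob:
  assumes "1/4 \<le> p" "p \<le> 3/4"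
  shows "doubling (coded_measure (block_prob p))"
  using assms
  by (intro doubling_coded_measure[where c=theta] admissible_block_prob theta_le_digit_prob_block_prob)
    (auto simp: theta_def)

definition nu_typical :: "nat \<Rightarrow> cantor \<Rightarrow> bool" where
  "nu_typical k x \<longleftrightarrow> (\<forall>j<k. passes_test j x \<and> sparse_entropy j x)"

lemma nu_typical_Suc: "nu_typical (Suc k) x \<longleftrightarrow> nu_typical k x \<and> passes_test k x \<and> sparse_entropy k x"
  by (auto simp: nu_typical_def less_Suc_eq)

lemma nu_typical_imp_passes_all: "nu_typical k x \<Longrightarrow> passes_all k x"
  by (simp add: nu_typical_def passes_all_def)

lemma prefix_determined_nu_typical: "prefix_determined (block_start k) (nu_typical k)"
proof (rule prefix_determinedI)
  fix x y :: cantor assume xy: "\<And>i. i < block_start k \<Longrightarrow> x i = y i"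
  have "passes_test j x = passes_test j y \<and> sparse_entropy j x = sparse_entropy j y" if "j < k" for j
  proof
    show "passes_test j x = passes_test j y"
      using xy test_end_le_block_start[OF that]
      by (intro prefix_determinedD[OF prefix_determined_passes_test]) simp
    show "sparse_entropy j x = sparse_entropy j y"
      using xy block_start_mono[of "Suc j" k] that
      by (intro prefix_determinedD[OF prefix_determined_sparse_entropy]) simp
  qed
  then show "nu_typical k x = nu_typical k y" by (simp add: nu_typical_def)
qed

lemma prefix_determined_nu_typical_passes_test:
  "prefix_determined (test_end k) (\<lambda>x. nu_typical k x \<and> passes_test k x)"
proof (rule prefix_determinedI)
  fix x y :: cantor assume xy: "\<And>i. i < test_end k \<Longrightarrow> x i = y i"
  have "nu_typical k x = nu_typical k y"
    using xy block_start_le_test_end[of k]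
    by (intro prefix_determinedD[OF prefix_determined_nu_typical]) simp
  moreover have "passes_test k x = passes_test k y"
    using xy by (rule prefix_determinedD[OF prefix_determined_passes_test])
  ultimately show "(nu_typical k x \<and> passes_test k x) = (nu_typical k y \<and> passes_test k y)" by simp
qed

end

locale mu_nu = blocks +
  fixes eta :: real
  assumes eta_pos: "0 < eta" and eta_le: "eta \<le> 1/16"
    and test_len_base: "(1 - 4 * eta^2) ^ m0 \<le> 1/2"
begin

abbreviation mu_probs :: "nat \<Rightarrow> cantor \<Rightarrow> real" where
  "mu_probs \<equiv> block_prob (1/2 - eta)"

abbreviation nu_probs :: "nat \<Rightarrow> cantor \<Rightarrow> real" where
  "nu_probs \<equiv> block_prob (1/2 + eta)"

definition mu :: "cantor measure" where
  "mu = coded_measure mu_probs"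

definition nu :: "cantor measure" where
  "nu = coded_measure nu_probs"

lemma admissible_mu_probs: "admissible mu_probs"
  using eta_pos eta_le by (intro admissible_block_prob) auto

lemma admissible_nu_probs: "admissible nu_probs"
  using eta_pos eta_le by (intro admissible_block_prob) auto

lemma chernoff_factor_le: "(1 - 4 * eta^2) ^ test_len k \<le> (1/2)^(k + 3)"
proof -
  have "eta^2 \<le> (1/16)^2" using eta_pos eta_le by (intro power_mono) auto
  then have "0 \<le> 1 - 4 * eta^2" by (simp add: power2_eq_square)
  then have "((1 - 4 * eta^2) ^ m0) ^ (k + 3) \<le> (1/2)^(k + 3)"
    using test_len_base by (intro power_mono) auto
  then show ?thesis by (simp add: test_len_def power_mult)
qed

section \<open>The measure \<open>\<mu>\<close> fails a test almost surely\<close>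

lemma expect_mu_passes_all: "expect mu_probs (block_start k) (\<lambda>x. of_bool (passes_all k x)) \<le> (1/2)^k"
proof (induction k)
  case 0
  show ?case using expect_le_1[OF admissible_mu_probs] by simp
next
  case (Suc k)
  let ?g = "\<lambda>x. of_bool (passes_all k x) :: real"
  have "expect mu_probs (block_start (Suc k)) (\<lambda>x. of_bool (passes_all (Suc k) x)) =
      expect mu_probs (test_end k) (\<lambda>x. of_bool (passes_all (Suc k) x))"
    by (intro expect_prefix_determined admissible_mu_probs prefix_determined_of_bool
      prefix_determined_passes_all test_end_mono test_end_le_block_start_Suc) simp
  also have "\<dots> = expect mu_probs (block_start k + 2 * test_len k)
      (\<lambda>x. if test_len k \<le> count_digit True (block_start k) (2 * test_len k) x then ?g x else 0)"
    unfolding test_end_def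
    by (rule arg_cong[where f="expect mu_probs (block_start k + 2 * test_len k)"], rule ext)
      (auto simp: passes_all_Suc passes_test_def)
  also have "\<dots> \<le> (1 - 4 * eta^2) ^ test_len k * expect mu_probs (block_start k) ?g"
    using eta_pos eta_le
    by (intro expect_count_digit_half admissible_mu_probs prefix_determined_of_bool
      prefix_determined_passes_all_block_start) (auto simp: block_prob_test test_end_def)
  also have "\<dots> \<le> (1/2) * (1/2)^k"
  proof (rule mult_mono)
    show "(1 - 4 * eta^2) ^ test_len k \<le> 1/2"
      using chernoff_factor_le[of k] power_decreasing[of 1 "k + 3" "1/2::real"] by simp
  qed (use Suc expect_nonneg[OF admissible_mu_probs] in auto)
  finally show ?case by simp
qed

lemma measure_mu_passes_all: "measure mu {x. passes_all k x} \<le> (1/2)^k"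
  using expect_mu_passes_all[of k]
  by (simp add: mu_def measure_coded_measure_Collect[OF admissible_mu_probs
      prefix_determined_passes_all_block_start])

lemma digit_prob_mu_le:
  assumes "\<not> passes_all K y" "block_start K \<le> i"
  shows "digit_prob mu_probs i y \<le> 9/16"
proof -
  have "K \<le> block_of i"
    using assms(2) block_of_bounds(2)[of i] block_start_mono[of "Suc (block_of i)" K] by linarith
  then have "\<not> passes_all (Suc (block_of i)) y"
    using assms(1) passes_all_antimono[of K "Suc (block_of i)" y] by auto
  then show ?thesis using eta_pos eta_le by (auto simp: digit_prob_def block_prob_def)
qed

lemma cyl_weight_mu_le:
  assumes "\<not> passes_all K y"
  shows "cyl_weight mu_probs n y \<le> (9/16)^(n - block_start K)"
proof (induction n)
  case (Suc n)
  have "digit_prob mu_probs n y \<le> (if block_start K \<le> n then 9/16 else 1)"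
    using digit_prob_mu_le[OF assms] digit_prob_le_1[OF admissible_mu_probs] by simp
  then have "cyl_weight mu_probs n y * digit_prob mu_probs n y
      \<le> (9/16)^(n - block_start K) * (if block_start K \<le> n then 9/16 else 1)"
    using Suc cyl_weight_pos[OF admissible_mu_probs] digit_prob_pos[OF admissible_mu_probs]
    by (intro mult_mono) (auto intro: less_imp_le)
  also have "\<dots> = (9/16)^(Suc n - block_start K)"
    by (simp add: Suc_diff_le)
  finally show ?case by (simp add: cyl_weight_Suc)
qed simp

lemma measure_mu_cyl_le:
  assumes "\<not> passes_all K y"
  shows "measure mu (cyl n y) \<le> (16/9)^(block_start K) * ((1/2)^n) powr (4/5)"
proof -
  let ?B = "block_start K"
  have "(9/16::real)^(n - ?B) * (9/16)^?B \<le> (9/16)^n"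
    by (subst power_add[symmetric]) (intro power_decreasing; simp)
  then have "(9/16::real)^(n - ?B) \<le> (16/9)^?B * (9/16)^n"
    by (simp add: field_simps power_divide)
  also have "\<dots> \<le> (16/9)^?B * ((1/2)^n) powr (4/5)"
    by (intro mult_left_mono nine_sixteenths_pow_le) simp
  finally show ?thesis
    using cyl_weight_mu_le[OF assms, of n]
    by (simp add: mu_def measure_coded_measure_cyl[OF admissible_mu_probs])
qed

lemma hausdorff_dim_ge_mu:
  assumes E: "E \<in> sets mu" "0 < emeasure mu E"
  shows "4/5 \<le> hausdorff_dim E"
proof (rule hausdorff_dim_ge)
  fix s :: real assume s: "0 \<le> s" "s < 4/5"
  interpret prob_space mu unfolding mu_def by (rule prob_space_coded_measure[OF admissible_mu_probs])
  have "0 < measure mu E" using E(2) by (simp add: emeasure_eq_measure)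
  then obtain K where K: "(1/2::real)^K < measure mu E" using real_arch_pow_inv[of _ "1/2"] by force
  let ?G = "{x. passes_all K x}"
  have G: "?G \<in> sets mu"
    unfolding mu_def sets_coded_measure
    by (rule prefix_determined_in_Kborel[of "block_start K"])
      (simp add: prefix_determined_passes_all_block_start)
  have E': "E - ?G \<in> sets mu" using E(1) G by auto
  have "measure mu E \<le> measure mu ((E - ?G) \<union> ?G)"
    by (rule finite_measure_mono[OF _ sets.Un[OF E' G]]) auto
  also have "\<dots> \<le> measure mu (E - ?G) + measure mu ?G"
    by (rule measure_Un_le[OF E' G])
  finally have pos: "0 < measure mu (E - ?G)" using measure_mu_passes_all[of K] K by linarith
  have m: "prob_space mu" "sets mu = sets Kborel"
    by (simp_all add: mu_def prob_space_coded_measure[OF admissible_mu_probs])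
  have bnd: "measure mu (cyl k y) \<le> (16/9)^(block_start K) * ((1/2)^k) powr (4/5)"
    if "y \<in> E - ?G" for y k
    using that by (intro measure_mu_cyl_le) simp
  show "hausdorff_measure s E \<noteq> 0"
    by (rule mass_distribution_principle[OF m(1) m(2) _ _ _ E' _ pos bnd]) (use s in auto)
qed

lemma lower_dim_mu: "4/5 \<le> lower_dim mu"
  unfolding mu_def
  by (rule lower_dim_ge[OF prob_space_coded_measure[OF admissible_mu_probs]])
    (rule hausdorff_dim_ge_mu[unfolded mu_def])

section \<open>The measure \<open>\<nu>\<close> is concentrated on a set of dimension at most \<open>1/2\<close>\<close>

lemma expect_nu_fails_test:
  "expect nu_probs (test_end k)
    (\<lambda>x. if test_len k \<le> count_digit False (block_start k) (2 * test_len k) x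
      then of_bool (nu_typical k x) else 0)
  \<le> (1/2)^(k + 3)"
proof -
  have "expect nu_probs (block_start k + 2 * test_len k)
    (\<lambda>x. if test_len k \<le> count_digit False (block_start k) (2 * test_len k) x
      then of_bool (nu_typical k x) else 0)
    \<le> (1 - 4 * eta^2) ^ test_len k * expect nu_probs (block_start k) (\<lambda>x. of_bool (nu_typical k x))"
    using eta_pos eta_le
    by (intro expect_count_digit_half admissible_nu_probs prefix_determined_of_bool
      prefix_determined_nu_typical) (auto simp: block_prob_test test_end_def)
  also have "\<dots> \<le> (1/2)^(k + 3) * 1"
    using chernoff_factor_le[of k] expect_le_1[OF admissible_nu_probs]
      expect_nonneg[OF admissible_nu_probs]
    by (intro mult_mono) auto
  finally show ?thesis by (simp add: test_end_def)
qed

lemma expect_nu_dense_entropy: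
  "expect nu_probs (block_start (Suc k))
    (\<lambda>x. if entropy_len k \<le> count_digit True (test_end k) (32 * entropy_len k) x
      then of_bool (nu_typical k x \<and> passes_test k x) else 0)
  \<le> (1/2)^(k + 3)"
proof -
  let ?j = "entropy_len k"
  have "expect nu_probs (test_end k + 32 * ?j)
    (\<lambda>x. if ?j \<le> count_digit True (test_end k) (32 * ?j) x
      then of_bool (nu_typical k x \<and> passes_test k x) else 0)
    \<le> (1 - theta + theta * 4) ^ (32 * ?j) / 4 ^ ?j
      * expect nu_probs (test_end k) (\<lambda>x. of_bool (nu_typical k x \<and> passes_test k x))"
    by (intro expect_count_digit_tail admissible_nu_probs prefix_determined_of_bool
      prefix_determined_nu_typical_passes_test)
      (auto simp: block_prob_entropy block_start_Suc passes_all_Suc nu_typical_imp_passes_all)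
  also have "\<dots> \<le> (1/2) ^ ?j * 1"
  proof (rule mult_mono)
    have "1 - theta + theta * 4 = 259/256" by (simp add: theta_def)
    then have "(1 - theta + theta * 4) ^ (32 * ?j) / 4 ^ ?j = ((259/256)^32 / 4) ^ ?j"
      by (simp only: power_mult power_divide)
    also have "\<dots> \<le> (1/2) ^ ?j" by (rule power_mono) (simp_all add: power_divide)
    finally show "(1 - theta + theta * 4) ^ (32 * ?j) / 4 ^ ?j \<le> (1/2) ^ ?j" .
  qed (use expect_le_1[OF admissible_nu_probs] expect_nonneg[OF admissible_nu_probs] in auto)
  also have "\<dots> \<le> (1/2)^(k + 3)" by (simp add: power_decreasing entropy_len_def)
  finally show ?thesis by (simp add: block_start_Suc)
qed

lemma expect_nu_typical:
  "1/2 + (1/2)^(k + 1) \<le> expect nu_probs (block_start k) (\<lambda>x. of_bool (nu_typical k x))"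
proof (induction k)
  case 0
  show ?case using expect_const[OF admissible_nu_probs] by (simp add: nu_typical_def)
next
  case (Suc k)
  let ?N = "block_start (Suc k)"
  let ?c = "\<lambda>x. of_bool (nu_typical k x) :: real"
  let ?fail = "\<lambda>x. if test_len k \<le> count_digit False (block_start k) (2 * test_len k) x then ?c x else 0"
  let ?dense = "\<lambda>x. if entropy_len k \<le> count_digit True (test_end k) (32 * entropy_len k) x
      then of_bool (nu_typical k x \<and> passes_test k x) else 0"
  \<comment> \<open>leaving \<open>nu_typical\<close> at block \<open>k\<close> means failing test \<open>k\<close> or a dense entropy window\<close>
  have "?c x \<le> of_bool (nu_typical (Suc k) x) + ?fail x + ?dense x" for x
    using count_digit_True_False[of "block_start k" "2 * test_len k" x]
    by (auto simp: nu_typical_Suc passes_test_def sparse_entropy_def)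
  then have "expect nu_probs ?N ?c \<le> expect nu_probs ?N (\<lambda>x. of_bool (nu_typical (Suc k) x)) +
      expect nu_probs ?N ?fail + expect nu_probs ?N ?dense"
    using expect_mono[OF admissible_nu_probs] by (simp add: expect_add[symmetric])
  moreover have "expect nu_probs ?N ?c = expect nu_probs (block_start k) ?c"
    by (intro expect_prefix_determined admissible_nu_probs prefix_determined_of_bool
      prefix_determined_nu_typical block_start_mono) simp
  moreover have "expect nu_probs ?N ?fail = expect nu_probs (test_end k) ?fail"
  proof (intro expect_prefix_determined admissible_nu_probs test_end_le_block_start_Suc
    prefix_determinedI)
    fix x y :: cantor assume xy: "\<And>i. i < test_end k \<Longrightarrow> x i = y i"
    have "nu_typical k x = nu_typical k y"
      using xy block_start_le_test_end[of k]
      by (intro prefix_determinedD[OF prefix_determined_nu_typical]) simp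
    moreover have "count_digit False (block_start k) (2 * test_len k) x =
        count_digit False (block_start k) (2 * test_len k) y"
      using xy by (intro prefix_determinedD[OF prefix_determined_count_digit]) (simp add: test_end_def)
    ultimately show "?fail x = ?fail y" by simp
  qed
  ultimately have "expect nu_probs (block_start k) ?c
      \<le> expect nu_probs ?N (\<lambda>x. of_bool (nu_typical (Suc k) x)) + 2 * (1/2)^(k + 3)"
    using expect_nu_fails_test[of k] expect_nu_dense_entropy[of k] by linarith
  moreover have "(1/2::real)^(k + 3) = (1/2)^k / 8" "(1/2::real)^(Suc k + 1) = (1/2)^k / 4"
    "(1/2::real)^(k + 1) = (1/2)^k / 2"
    by (simp_all add: power_add power_divide)
  ultimately show ?case using Suc by linarith
qed

lemma measure_nu_typical: "1/2 \<le> measure nu {x. \<forall>k. nu_typical k x}"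
proof -
  interpret prob_space nu unfolding nu_def by (rule prob_space_coded_measure[OF admissible_nu_probs])
  let ?A = "\<lambda>k. {x. nu_typical k x}"
  have A: "?A k \<in> sets nu" for k
    unfolding nu_def sets_coded_measure
    by (rule prefix_determined_in_Kborel[of "block_start k"]) (simp add: prefix_determined_nu_typical)
  have "1/2 \<le> measure nu (?A k)" for k
  proof -
    have "measure nu (?A k) = expect nu_probs (block_start k) (\<lambda>x. of_bool (nu_typical k x))"
      by (simp add: nu_def measure_coded_measure_Collect[OF admissible_nu_probs
          prefix_determined_nu_typical])
    moreover have "(0::real) \<le> (1/2)^(k + 1)" by simp
    ultimately show ?thesis using expect_nu_typical[of k] by linarith
  qed
  moreover have "(\<lambda>k. measure nu (?A k)) \<longlonglongrightarrow> measure nu (\<Inter>k. ?A k)"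
    using A by (intro finite_Lim_measure_decseq) (auto intro: decseq_SucI simp: nu_typical_Suc)
  ultimately have "1/2 \<le> measure nu (\<Inter>k. ?A k)" by (intro LIMSEQ_le_const) auto
  then show ?thesis by (simp add: Collect_all_eq)
qed

lemma cyl_weight_nu_typical_ge:
  assumes "nu_typical (Suc k) x"
  shows "(1/2)^(11 * entropy_len k) \<le> cyl_weight nu_probs (block_start (Suc k)) x"
proof -
  let ?t = "test_end k" and ?j = "entropy_len k"
  have few: "count_digit True ?t (32 * ?j) x < ?j"
    using assms by (simp add: nu_typical_Suc sparse_entropy_def)
  have "passes_all (Suc k) x" using assms by (rule nu_typical_imp_passes_all)
  then have window: "cyl_weight nu_probs (?t + 32 * ?j) x = cyl_weight nu_probs ?t x *
      theta ^ count_digit True ?t (32 * ?j) x * (1 - theta) ^ count_digit False ?t (32 * ?j) x"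
    by (intro cyl_weight_const_window) (simp add: block_prob_entropy block_start_Suc)
  have "(1/2::real)^(2 * ?j) \<le> (1/2)^(8 * ?t)"
    by (intro power_decreasing) (auto simp: entropy_len_def)
  also have "\<dots> = theta ^ ?t" by (simp add: theta_def power_mult power_divide)
  also have "\<dots> \<le> cyl_weight nu_probs ?t x"
    using eta_pos eta_le
    by (intro cyl_weight_ge_pow admissible_nu_probs theta_le_digit_prob_block_prob)
      (auto simp: theta_def)
  finally have t1: "(1/2::real)^(2 * ?j) \<le> cyl_weight nu_probs ?t x" .
  have "(1/2::real)^(8 * ?j) = theta ^ ?j" by (simp add: theta_def power_mult power_divide)
  also have "\<dots> \<le> theta ^ count_digit True ?t (32 * ?j) x"
    using few by (intro power_decreasing) (auto simp: theta_def)
  finally have t2: "(1/2::real)^(8 * ?j) \<le> theta ^ count_digit True ?t (32 * ?j) x" .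
  have "(1/2::real)^?j \<le> ((255/256)^32)^?j" by (intro power_mono) (simp_all add: power_divide)
  also have "\<dots> = (1 - theta) ^ (32 * ?j)" by (simp add: theta_def power_mult)
  also have "\<dots> \<le> (1 - theta) ^ count_digit False ?t (32 * ?j) x"
    using count_digit_True_False[of ?t "32 * ?j" x] by (intro power_decreasing) (auto simp: theta_def)
  finally have t3: "(1/2::real)^?j \<le> (1 - theta) ^ count_digit False ?t (32 * ?j) x" .
  have W0: "0 \<le> cyl_weight nu_probs ?t x"
    using cyl_weight_pos[OF admissible_nu_probs] less_imp_le by blast
  have "(1/2::real)^(11 * ?j) = (1/2)^(2 * ?j) * (1/2)^(8 * ?j) * (1/2)^?j"
    by (simp add: power_add[symmetric])
  also have "\<dots> \<le> cyl_weight nu_probs (?t + 32 * ?j) x"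
    unfolding window using t1 t2 t3 W0 by (intro mult_mono) (auto simp: theta_def)
  finally show ?thesis by (simp add: block_start_Suc)
qed

text \<open>Points of \<open>nu_typical (k + 1)\<close> lie in cylinders of generation at least \<open>32 j\<close> and
  \<open>\<nu>\<close>-measure at least \<open>2^(-11 j)\<close>, where \<open>j = entropy_len k\<close>; there are at most \<open>2^(11 j)\<close> of them.\<close>
lemma nu_typical_heavy_cover:
  fixes k :: nat
  defines "N \<equiv> block_start (Suc k)" and "j \<equiv> entropy_len k"
  shows "\<exists>H\<subseteq>words N. {x. \<forall>k. nu_typical k x} \<subseteq> \<Union>(cyl N ` H) \<and>
    card H * ((1/2)^N) powr (1/2) \<le> (1/2)^(5 * j)"
proof (intro exI conjI)
  define H where "H = {w \<in> words N. (1/2)^(11 * j) \<le> cyl_weight nu_probs N w}"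
  show "H \<subseteq> words N" by (simp add: H_def)
  have "x \<in> cyl N (trunc N x) \<and> trunc N x \<in> H" if "\<forall>k. nu_typical k x" for x
  proof -
    have "(1/2)^(11 * j) \<le> cyl_weight nu_probs N x"
      using that cyl_weight_nu_typical_ge[of k x] by (simp add: N_def j_def)
    also have "\<dots> = cyl_weight nu_probs N (trunc N x)"
      by (intro prefix_determinedD[OF prefix_determined_cyl_weight[OF admissible_nu_probs]])
        (simp add: trunc_def)
    finally show ?thesis by (simp add: H_def trunc_in_words mem_cyl_trunc)
  qed
  then show "{x. \<forall>k. nu_typical k x} \<subseteq> \<Union>(cyl N ` H)" by blast
  have "real (card H) \<le> 2^(11 * j)"
    using card_heavy_words[OF admissible_nu_probs, of "(1/2)^(11 * j)" N]
    by (simp add: H_def power_divide)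
  moreover have "((1/2::real)^N) powr (1/2) \<le> (1/2)^(16 * j)"
  proof -
    have "((1/2::real)^N) powr (1/2) \<le> ((1/2)^(32 * j)) powr (1/2)"
      by (intro powr_mono2 power_decreasing) (auto simp: N_def j_def block_start_Suc)
    also have "(1/2::real)^(32 * j) = ((1/2)^(16 * j))^2" by (simp add: power_mult[symmetric])
    finally show ?thesis by (simp add: powr_half_sqrt)
  qed
  ultimately have "card H * ((1/2::real)^N) powr (1/2) \<le> 2^(11 * j) * (1/2)^(16 * j)"
    by (intro mult_mono) auto
  also have "(2::real)^(11 * j) * (1/2)^(16 * j) = (1/2)^(5 * j)"
  proof -
    have "(1/2::real)^(16 * j) = (1/2)^(11 * j) * (1/2)^(5 * j)" by (simp add: power_add[symmetric])
    moreover have "(2::real)^(11 * j) * (1/2)^(11 * j) = 1" by (simp add: power_mult_distrib[symmetric])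
    ultimately show ?thesis by (simp add: mult.assoc[symmetric])
  qed
  finally show "card H * ((1/2::real)^N) powr (1/2) \<le> (1/2)^(5 * j)" .
qed

lemma hausdorff_measure_nu_typical: "hausdorff_measure (1/2) {x. \<forall>k. nu_typical k x} = 0"
proof (rule hausdorff_measure_eq_0_cyl_covers)
  fix e :: real and n0 :: nat assume "0 < e"
  obtain k0 where k0: "(1/2::real)^k0 < e" using real_arch_pow_inv[of e "1/2"] \<open>0 < e\<close> by auto
  define k where "k = max k0 n0"
  let ?N = "block_start (Suc k)"
  obtain H where H: "H \<subseteq> words ?N" "{x. \<forall>k. nu_typical k x} \<subseteq> \<Union>(cyl ?N ` H)"
    and card: "card H * ((1/2)^?N) powr (1/2) \<le> (1/2::real)^(5 * entropy_len k)"
    using nu_typical_heavy_cover[of k] by blast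
  have "(1/2::real)^(5 * entropy_len k) \<le> (1/2)^k0"
    by (intro power_decreasing) (auto simp: k_def entropy_len_def)
  then have "card H * ((1/2)^?N) powr (1/2) \<le> e" using card k0 by linarith
  moreover have "n0 \<le> ?N" using le_block_start[of "Suc k"] by (simp add: k_def)
  ultimately show "\<exists>N\<ge>n0. \<exists>H\<subseteq>words N. {x. \<forall>k. nu_typical k x} \<subseteq> \<Union>(cyl N ` H) \<and>
      card H * ((1/2)^N) powr (1/2) \<le> e"
    using H by blast
qed simp

lemma lower_dim_nu: "lower_dim nu \<le> 1/2"
proof -
  interpret prob_space nu unfolding nu_def by (rule prob_space_coded_measure[OF admissible_nu_probs])
  let ?F = "{x. \<forall>k. nu_typical k x}"
  have "{x. nu_typical k x} \<in> sets Kborel" for k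
    by (rule prefix_determined_in_Kborel[of "block_start k"]) (simp add: prefix_determined_nu_typical)
  then have "?F \<in> sets nu"
    unfolding Collect_all_eq nu_def sets_coded_measure by (intro sets.countable_INT) auto
  moreover have "0 < emeasure nu ?F"
    using measure_nu_typical by (simp add: emeasure_eq_measure)
  ultimately have "lower_dim nu \<le> hausdorff_dim ?F" by (rule lower_dim_le_hausdorff_dim)
  also have "\<dots> \<le> 1/2" by (intro hausdorff_dim_le hausdorff_measure_nu_typical) simp
  finally show ?thesis .
qed

section \<open>Comparing the conditional probabilities of \<open>\<mu>\<close> and \<open>\<nu>\<close>\<close>

lemma ln_digit_prob_mu_nu:
  "\<bar>ln (digit_prob mu_probs i x) - ln (digit_prob nu_probs i x)\<bar> \<le> ln ((1/2 + eta) / (1/2 - eta))"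
proof -
  have "ln ((1/2 + eta) / (1/2 - eta)) = ln (1/2 + eta) - ln (1/2 - eta)"
    using eta_pos eta_le by (subst ln_div) auto
  moreover have "ln (1/2 - eta) \<le> ln (1/2 + eta)" using eta_pos eta_le by simp
  ultimately show ?thesis
    by (cases "i < test_end (block_of i)"; cases "x i") (auto simp: digit_prob_def block_prob_def)
qed

lemma ln_cyl_ratio_mu_nu:
  assumes "1 \<le> n"
  shows "\<bar>ln (measure mu (cyl n x) / measure mu (cyl (n - 1) x))
    - ln (measure nu (cyl n x) / measure nu (cyl (n - 1) x))\<bar> \<le> ln ((1/2 + eta) / (1/2 - eta))"
proof -
  obtain n' where "n = Suc n'" using assms by (cases n) auto
  then show ?thesis
    using ln_digit_prob_mu_nu[of n' x]
    by (simp add: mu_def nu_def measure_cyl_Suc_ratio[OF admissible_mu_probs]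
      measure_cyl_Suc_ratio[OF admissible_nu_probs])
qed

lemma ln_ratio_le: "ln ((1/2 + eta) / (1/2 - eta)) \<le> 5 * eta"
proof -
  have "ln ((1/2 + eta) / (1/2 - eta)) \<le> (1/2 + eta) / (1/2 - eta) - 1"
    using eta_pos eta_le by (intro ln_le_minus_one) auto
  also have "\<dots> = 2 * eta / (1/2 - eta)" using eta_le by (simp add: field_simps)
  also have "\<dots> \<le> 5 * eta" using eta_pos eta_le by (simp add: field_simps)
  finally show ?thesis .
qed

end

theorem mainTheorem7:
  fixes \<epsilon> :: real
  assumes "\<epsilon> > 0"
  shows "\<exists>\<mu> \<nu>. borel_prob \<mu> \<and> borel_prob \<nu> \<and> doubling \<mu> \<and> doubling \<nu> \<and>
     (\<exists>\<delta><\<epsilon>. \<forall>n\<ge>1. \<forall>x.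
        \<bar>ln (measure \<mu> (cyl n x) / measure \<mu> (cyl (n-1) x))
         - ln (measure \<nu> (cyl n x) / measure \<nu> (cyl (n-1) x))\<bar> \<le> \<delta>) \<and>
     \<bar>lower_dim \<mu> - lower_dim \<nu>\<bar> > 1/4"
proof -
  define eta where "eta = min (1/16) (\<epsilon>/16)"
  have eta: "0 < eta" "eta \<le> 1/16" "eta \<le> \<epsilon>/16" using assms by (auto simp: eta_def)
  then have "1 - 4 * eta^2 < 1" by simp
  then obtain m0 where "(1 - 4 * eta^2) ^ m0 < 1/2" using real_arch_pow_inv[of "1/2"] by force
  with eta interpret mu_nu m0 eta by unfold_locales auto
  show ?thesis
  proof (intro exI conjI)
    show "borel_prob mu" "borel_prob nu"
      by (simp_all add: mu_def nu_def borel_prob_coded_measure admissible_mu_probs admissible_nu_probs)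
    show "doubling mu" "doubling nu"
      using eta by (simp_all add: mu_def nu_def doubling_block_prob)
    show "ln ((1/2 + eta) / (1/2 - eta)) < \<epsilon>" using ln_ratio_le eta assms by linarith
    show "\<forall>n\<ge>1. \<forall>x. \<bar>ln (measure mu (cyl n x) / measure mu (cyl (n-1) x))
        - ln (measure nu (cyl n x) / measure nu (cyl (n-1) x))\<bar> \<le> ln ((1/2 + eta) / (1/2 - eta))"
      using ln_cyl_ratio_mu_nu by blast
    show "\<bar>lower_dim mu - lower_dim nu\<bar> > 1/4" using lower_dim_mu lower_dim_nu by linarith
  qed
qed

end
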